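(* Let $\mathcal{H}$ be a separable infinite-dimensional complex Hilbert space and $\mathcal{K}=\bigoplus_{k=1}^\infty\mathcal{H}$. There exists a sequence of quasinilpotent operators $A_k\in\mathcal{B}(\mathcal{H})$ such that $\bigoplus_{k=1}^\infty A_k$ is a quasinilpotent operator in $\mathcal{B}(\mathcal{K})$ and \[\Lambda\Bigl(\bigoplus_{k=1}^\infty A_k\Bigr)\supsetneq\overline{\bigcup_{k=1}^\infty\Lambda(A_k)},\] where the bar denotes closure in $\mathbb{R}$.
   Context: For quasinilpotent $T$ (i.e. $\sigma(T)=\{0\}$) and $x\neq 0$, $k_x(T)=\limsup_{\lambda\to0}\frac{\ln\|(\lambda-T)^{-1}x\|}{\ln\|(\lambda-T)^{-1}\|}$, and the power set is $\Lambda(T)=\{k_x(T): x\neq0\}$. *)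

theory Defs
  imports "HOL-Analysis.Analysis"
begin

text \<open>Concrete model of complex Hilbert spaces: l2 over an index type 'i.
  H = l2 over nat (the separable infinite-dimensional complex Hilbert space, up to
  unitary equivalence); K = direct sum of countably many copies of H = l2 over nat \<times> nat.
  Operators are functions on ('i \<Rightarrow> complex), only their behaviour on l2 matters.\<close>

definition l2 :: "('i \<Rightarrow> complex) set" where
  "l2 = {f. (\<lambda>i. (cmod (f i))\<^sup>2) summable_on UNIV}"

definition l2norm :: "('i \<Rightarrow> complex) \<Rightarrow> real" where
  "l2norm f = sqrt (\<Sum>\<^sub>\<infinity>i. (cmod (f i))\<^sup>2)"

definition bounded_op :: "(('i \<Rightarrow> complex) \<Rightarrow> ('i \<Rightarrow> complex)) \<Rightarrow> bool" where
  "bounded_op T \<longleftrightarrow>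
     (\<forall>f\<in>l2. T f \<in> l2) \<and>
     (\<forall>f\<in>l2. \<forall>g\<in>l2. \<forall>c::complex. T (\<lambda>i. c * f i + g i) = (\<lambda>i. c * T f i + T g i)) \<and>
     (\<exists>C. \<forall>f\<in>l2. l2norm (T f) \<le> C * l2norm f)"

definition opnorm :: "(('i \<Rightarrow> complex) \<Rightarrow> ('i \<Rightarrow> complex)) \<Rightarrow> real" where
  "opnorm T = Sup {l2norm (T f) | f. f \<in> l2 \<and> l2norm f \<le> 1}"

definition invertible_op :: "(('i \<Rightarrow> complex) \<Rightarrow> ('i \<Rightarrow> complex)) \<Rightarrow> bool" where
  "invertible_op S \<longleftrightarrow> bounded_op S \<and>
     (\<exists>R. bounded_op R \<and> (\<forall>f\<in>l2. R (S f) = f \<and> S (R f) = f))"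

definition op_spectrum :: "(('i \<Rightarrow> complex) \<Rightarrow> ('i \<Rightarrow> complex)) \<Rightarrow> complex set" where
  "op_spectrum T = {l. \<not> invertible_op (\<lambda>f i. l * f i - T f i)}"

definition quasinilpotent :: "(('i \<Rightarrow> complex) \<Rightarrow> ('i \<Rightarrow> complex)) \<Rightarrow> bool" where
  "quasinilpotent T \<longleftrightarrow> bounded_op T \<and> op_spectrum T = {0}"

definition resolvent :: "(('i \<Rightarrow> complex) \<Rightarrow> ('i \<Rightarrow> complex)) \<Rightarrow> complex \<Rightarrow> ('i \<Rightarrow> complex) \<Rightarrow> ('i \<Rightarrow> complex)" where
  "resolvent T l x = (THE y. y \<in> l2 \<and> (\<lambda>i. l * y i - T y i) = x)"

definition kx :: "(('i \<Rightarrow> complex) \<Rightarrow> ('i \<Rightarrow> complex)) \<Rightarrow> ('i \<Rightarrow> complex) \<Rightarrow> ereal" where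
  "kx T x = Limsup (at (0::complex))
     (\<lambda>l. ereal (ln (l2norm (resolvent T l x)) / ln (opnorm (resolvent T l))))"

definition power_set :: "(('i \<Rightarrow> complex) \<Rightarrow> ('i \<Rightarrow> complex)) \<Rightarrow> ereal set" where
  "power_set T = {kx T x | x. x \<in> l2 \<and> x \<noteq> (\<lambda>_. 0)}"

definition direct_sum :: "(nat \<Rightarrow> ((nat \<Rightarrow> complex) \<Rightarrow> (nat \<Rightarrow> complex))) \<Rightarrow>
    ((nat \<times> nat \<Rightarrow> complex) \<Rightarrow> (nat \<times> nat \<Rightarrow> complex))" where
  "direct_sum A f = (\<lambda>(k, n). A k (\<lambda>m. f (k, m)) n)"

end

theory Submission
  imports Defs "HOL-Real_Asymp.Real_Asymp"
begin

text \<open>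
  Let \<open>wshift c\<close> be the weighted shift sending \<open>e n\<close> to \<open>c / sqrt (n + 1) e (n + 1)\<close>, so that its
  \<open>n\<close>-th power maps \<open>e 0\<close> to \<open>c ^ n / sqrt (n!) e n\<close>. Its resolvent at \<open>e 0\<close> then has norm
  \<open>r exp (c\<^sup>2 r\<^sup>2 / 2)\<close>, where \<open>r = 1 / |l|\<close>, and the norm of the whole resolvent exceeds this only
  by a factor polynomial in \<open>r\<close>. For every \<open>x \<noteq> 0\<close>, averaging the squared norm of the resolvent
  at \<open>x\<close> over roots of unity on a circle (a discrete Parseval identity) finds points where it has
  the same exponential size, so the power set of \<open>wshift c\<close> is \<open>{1}\<close>.
  For \<open>A 0 = wshift 1\<close> and \<open>A k = wshift (1/2)\<close>, \<open>k \<ge> 1\<close>, the resolvent of the direct sum has the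
  norm of the first summand, about \<open>exp (r\<^sup>2 / 2)\<close>, while at \<open>e (1, 0)\<close> it grows only like
  \<open>exp (r\<^sup>2 / 8)\<close>: so \<open>1/4\<close> lies in the power set of the direct sum but not in \<open>{1}\<close>, the closure
  of the union of the power sets of the summands.
\<close>

section \<open>Square-summable sequences\<close>

lemma l2_finite_sums_le:
  fixes f :: "'i \<Rightarrow> complex"
  assumes "\<And>F. finite F \<Longrightarrow> (\<Sum>i\<in>F. (cmod (f i))\<^sup>2) \<le> C\<^sup>2" and "C \<ge> 0"
  shows "f \<in> l2" and "l2norm f \<le> C"
proof -
  have sum: "(\<lambda>i. (cmod (f i))\<^sup>2) summable_on UNIV"
    by (rule nonneg_bdd_above_summable_on) (auto intro!: bdd_aboveI[where M = "C\<^sup>2"] assms(1))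
  then show "f \<in> l2" by (simp add: l2_def)
  have "(\<Sum>\<^sub>\<infinity>i. (cmod (f i))\<^sup>2) \<le> C\<^sup>2"
    by (rule infsum_le_finite_sums[OF sum]) (use assms(1) in auto)
  then show "l2norm f \<le> C" unfolding l2norm_def using assms(2) by (rule real_le_lsqrt[rotated])
qed

lemma l2norm_nonneg: "l2norm f \<ge> 0"
  unfolding l2norm_def by (simp add: infsum_nonneg)

lemma l2norm_squared: "(l2norm f)\<^sup>2 = (\<Sum>\<^sub>\<infinity>i. (cmod (f i))\<^sup>2)"
  unfolding l2norm_def by (simp add: infsum_nonneg)

lemma sum_le_l2norm_squared:
  assumes "f \<in> l2" "finite F"
  shows "(\<Sum>i\<in>F. (cmod (f i))\<^sup>2) \<le> (l2norm f)\<^sup>2"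
  unfolding l2norm_squared
  by (rule finite_sum_le_infsum) (use assms in \<open>auto simp: l2_def\<close>)

lemma L2_set_le_l2norm:
  assumes "f \<in> l2"
  shows "L2_set (\<lambda>i. cmod (f i)) F \<le> l2norm f"
proof (cases "finite F")
  case True
  then show ?thesis
    unfolding L2_set_def using sum_le_l2norm_squared[OF assms True] l2norm_nonneg[of f]
    by (simp add: real_sqrt_le_iff real_le_lsqrt)
qed (simp add: l2norm_nonneg)

lemma norm_le_l2norm:
  assumes "f \<in> l2"
  shows "cmod (f i) \<le> l2norm f"
  using L2_set_le_l2norm[OF assms, of "{i}"] by simp

lemma l2norm_pos:
  assumes "f \<in> l2" "f \<noteq> (\<lambda>_. 0)"
  shows "l2norm f > 0"
proof -
  obtain i where "f i \<noteq> 0" using assms(2) by auto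
  then show ?thesis using norm_le_l2norm[OF assms(1), of i] by (meson less_le_trans zero_less_norm_iff)
qed

lemma l2_add:
  assumes "f \<in> l2" "g \<in> l2"
  shows "(\<lambda>i. f i + g i) \<in> l2" and "l2norm (\<lambda>i. f i + g i) \<le> l2norm f + l2norm g"
proof -
  have "(\<Sum>i\<in>F. (cmod (f i + g i))\<^sup>2) \<le> (l2norm f + l2norm g)\<^sup>2" if "finite F" for F
  proof -
    have "L2_set (\<lambda>i. cmod (f i + g i)) F \<le> L2_set (\<lambda>i. cmod (f i) + cmod (g i)) F"
      by (rule L2_set_mono) (auto intro: norm_triangle_ineq)
    also have "\<dots> \<le> L2_set (\<lambda>i. cmod (f i)) F + L2_set (\<lambda>i. cmod (g i)) F"
      by (rule L2_set_triangle_ineq)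
    also have "\<dots> \<le> l2norm f + l2norm g"
      using L2_set_le_l2norm assms by (intro add_mono) auto
    finally have "L2_set (\<lambda>i. cmod (f i + g i)) F \<le> l2norm f + l2norm g" .
    then show ?thesis unfolding L2_set_def by (rule sqrt_le_D)
  qed
  from l2_finite_sums_le[OF this] show "(\<lambda>i. f i + g i) \<in> l2" "l2norm (\<lambda>i. f i + g i) \<le> l2norm f + l2norm g"
    by (simp_all add: add_nonneg_nonneg l2norm_nonneg)
qed

lemma l2_scale: "f \<in> l2 \<Longrightarrow> (\<lambda>i. c * f i) \<in> l2"
  unfolding l2_def by (simp add: norm_mult power_mult_distrib summable_on_cmult_right)

lemma l2norm_scale: "l2norm (\<lambda>i. c * f i) = cmod c * l2norm f"
proof -
  have "(\<Sum>\<^sub>\<infinity>i. (cmod (c * f i))\<^sup>2) = (cmod c)\<^sup>2 * (\<Sum>\<^sub>\<infinity>i. (cmod (f i))\<^sup>2)"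
    by (simp add: norm_mult power_mult_distrib infsum_cmult_right')
  then show ?thesis unfolding l2norm_def by (simp add: real_sqrt_mult)
qed

lemma l2_zero [simp]: "(\<lambda>_. 0) \<in> l2"
  unfolding l2_def by simp

lemma l2norm_zero [simp]: "l2norm (\<lambda>_. 0) = 0"
  unfolding l2norm_def by simp

definition basis_vec :: "'i \<Rightarrow> 'i \<Rightarrow> complex" where
  "basis_vec j = (\<lambda>i. if i = j then 1 else 0)"

lemma basis_vec_l2: "basis_vec j \<in> l2" and l2norm_basis_vec: "l2norm (basis_vec j) = 1"
proof -
  have "(cmod (basis_vec j i))\<^sup>2 = (if i = j then 1 else 0)" for i
    by (simp add: basis_vec_def)
  then have sums: "(\<Sum>i\<in>F. (cmod (basis_vec j i))\<^sup>2) \<le> 1\<^sup>2" if "finite F" for F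
    using that by (simp add: sum.delta')
  show "basis_vec j \<in> l2" using l2_finite_sums_le(1)[OF sums] by simp
  have "l2norm (basis_vec j) \<le> 1" using l2_finite_sums_le(2)[OF sums] by simp
  moreover have "cmod (basis_vec j j) \<le> l2norm (basis_vec j)"
    by (rule norm_le_l2norm[OF \<open>basis_vec j \<in> l2\<close>])
  ultimately show "l2norm (basis_vec j) = 1" by (simp add: basis_vec_def)
qed

lemma basis_vec_nonzero: "basis_vec j \<noteq> (\<lambda>_. 0)"
  unfolding basis_vec_def by (metis one_neq_zero)


section \<open>Bounded operators and resolvents\<close>

lemma bounded_opI:
  assumes "\<And>f. f \<in> l2 \<Longrightarrow> T f \<in> l2"
    and "\<And>f g c. f \<in> l2 \<Longrightarrow> g \<in> l2 \<Longrightarrow> T (\<lambda>i. c * f i + g i) = (\<lambda>i. c * T f i + T g i)"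
    and "\<And>f. f \<in> l2 \<Longrightarrow> l2norm (T f) \<le> C * l2norm f"
  shows "bounded_op T"
  unfolding bounded_op_def using assms by blast

lemma bounded_op_l2: "bounded_op T \<Longrightarrow> f \<in> l2 \<Longrightarrow> T f \<in> l2"
  unfolding bounded_op_def by blast

lemma bounded_op_lincomb:
  "bounded_op T \<Longrightarrow> f \<in> l2 \<Longrightarrow> g \<in> l2 \<Longrightarrow> T (\<lambda>i. c * f i + g i) = (\<lambda>i. c * T f i + T g i)"
  unfolding bounded_op_def by blast

lemma bounded_op_zero:
  assumes "bounded_op T"
  shows "T (\<lambda>_. 0) = (\<lambda>_. 0)"
  using bounded_op_lincomb[OF assms l2_zero l2_zero, of "-1"] by simp

lemma bounded_op_scale:
  assumes "bounded_op T" "f \<in> l2"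
  shows "T (\<lambda>i. c * f i) = (\<lambda>i. c * T f i)"
  using bounded_op_lincomb[OF assms l2_zero, of c] bounded_op_zero[OF assms(1)] by simp

lemma bdd_above_opnorm:
  assumes "bounded_op T"
  shows "bdd_above {l2norm (T f) | f. f \<in> l2 \<and> l2norm f \<le> 1}"
proof -
  obtain C where C: "\<forall>f\<in>l2. l2norm (T f) \<le> C * l2norm f"
    using assms unfolding bounded_op_def by blast
  have "l2norm (T f) \<le> max C 0" if "f \<in> l2" "l2norm f \<le> 1" for f
  proof -
    have "C * l2norm f \<le> max C 0 * l2norm f" by (rule mult_right_mono) (auto simp: l2norm_nonneg)
    also have "\<dots> \<le> max C 0" using that(2) by (simp add: mult_left_le)
    finally show ?thesis using C that(1) by fastforce
  qed
  then show ?thesis by (auto intro!: bdd_aboveI[where M = "max C 0"])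
qed

lemma l2norm_le_opnorm:
  assumes "bounded_op T" "f \<in> l2" "l2norm f \<le> 1"
  shows "l2norm (T f) \<le> opnorm T"
  unfolding opnorm_def by (rule cSup_upper) (use assms bdd_above_opnorm in auto)

lemma opnorm_le:
  assumes "\<And>f. f \<in> l2 \<Longrightarrow> l2norm (T f) \<le> C * l2norm f" "C \<ge> 0"
  shows "opnorm T \<le> C"
  unfolding opnorm_def
proof (rule cSup_least)
  have "l2norm (T (\<lambda>_. 0)) \<in> {l2norm (T f) | f. f \<in> l2 \<and> l2norm f \<le> 1}"
    by (intro CollectI exI[of _ "\<lambda>_. 0"]) simp
  then show "{l2norm (T f) | f. f \<in> l2 \<and> l2norm f \<le> 1} \<noteq> {}" by blast
  have "l2norm (T f) \<le> C" if "f \<in> l2" "l2norm f \<le> 1" for f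
    using assms(1)[OF that(1)] mult_left_le[OF that(2) assms(2)] by linarith
  then show "\<And>x. x \<in> {l2norm (T f) | f. f \<in> l2 \<and> l2norm f \<le> 1} \<Longrightarrow> x \<le> C" by blast
qed

lemma opnorm_cong:
  assumes "\<And>f. f \<in> l2 \<Longrightarrow> S f = T f"
  shows "opnorm S = opnorm T"
proof -
  have "{l2norm (S f) | f. f \<in> l2 \<and> l2norm f \<le> 1} = {l2norm (T f) | f. f \<in> l2 \<and> l2norm f \<le> 1}"
    using assms by metis
  then show ?thesis unfolding opnorm_def by simp
qed

lemma l2norm_apply_le:
  assumes T: "bounded_op T" and f: "f \<in> l2"
  shows "l2norm (T f) \<le> opnorm T * l2norm f"
proof (cases "f = (\<lambda>_. 0)")
  case True
  then show ?thesis using bounded_op_zero[OF T] by simp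
next
  case False
  then have pos: "l2norm f > 0" by (rule l2norm_pos[OF f])
  define g where "g = (\<lambda>i. complex_of_real (1 / l2norm f) * f i)"
  have g: "g \<in> l2" unfolding g_def by (rule l2_scale[OF f])
  have "l2norm g = 1" unfolding g_def l2norm_scale using pos by (simp add: norm_divide)
  have "l2norm (T f) / l2norm f = l2norm (T g)"
    unfolding g_def bounded_op_scale[OF T f] l2norm_scale using pos by (simp add: norm_divide)
  also have "\<dots> \<le> opnorm T"
    using l2norm_le_opnorm[OF T g] \<open>l2norm g = 1\<close> by simp
  finally show ?thesis using pos by (simp add: field_simps)
qed

lemma bounded_op_scalar_minus:
  assumes T: "bounded_op T"
  shows "bounded_op (\<lambda>f i. l * f i - T f i)"
proof -
  obtain C where C: "\<forall>f\<in>l2. l2norm (T f) \<le> C * l2norm f"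
    using T unfolding bounded_op_def by blast
  have eq: "(\<lambda>i. l * f i - T f i) = (\<lambda>i. l * f i + (-1) * T f i)" for f by simp
  show ?thesis
  proof (rule bounded_opI)
    fix f :: "'a \<Rightarrow> complex" assume f: "f \<in> l2"
    show "(\<lambda>i. l * f i - T f i) \<in> l2"
      unfolding eq by (intro l2_add l2_scale bounded_op_l2[OF T] f)
    have "l2norm (\<lambda>i. l * f i - T f i) \<le> l2norm (\<lambda>i. l * f i) + l2norm (\<lambda>i. (-1) * T f i)"
      using l2_add(2)[OF l2_scale[OF f] l2_scale[OF bounded_op_l2[OF T f]]] unfolding eq .
    also have "\<dots> = cmod l * l2norm f + l2norm (T f)" by (simp only: l2norm_scale) simp
    also have "\<dots> \<le> (cmod l + C) * l2norm f" using C f by (simp add: algebra_simps)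
    finally show "l2norm (\<lambda>i. l * f i - T f i) \<le> (cmod l + C) * l2norm f" .
  next
    fix f g :: "'a \<Rightarrow> complex" and c assume "f \<in> l2" "g \<in> l2"
    then show "(\<lambda>i. l * (c * f i + g i) - T (\<lambda>i. c * f i + g i) i)
        = (\<lambda>i. c * (l * f i - T f i) + (l * g i - T g i))"
      using bounded_op_lincomb[OF T] by (simp add: algebra_simps)
  qed
qed

lemma invertible_opI:
  assumes "bounded_op T" "bounded_op R"
    and "\<And>f. f \<in> l2 \<Longrightarrow> R (\<lambda>i. l * f i - T f i) = f"
    and "\<And>f. f \<in> l2 \<Longrightarrow> (\<lambda>i. l * R f i - T (R f) i) = f"
  shows "invertible_op (\<lambda>f i. l * f i - T f i)"
  unfolding invertible_op_def
  by (intro conjI exI[of _ R] ballI bounded_op_scalar_minus assms)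

lemma resolvent_eqI:
  assumes "bounded_op R"
    and "\<And>f. f \<in> l2 \<Longrightarrow> R (\<lambda>i. l * f i - T f i) = f"
    and "\<And>f. f \<in> l2 \<Longrightarrow> (\<lambda>i. l * R f i - T (R f) i) = f"
    and "x \<in> l2"
  shows "resolvent T l x = R x"
  unfolding resolvent_def
proof (rule the_equality)
  show "R x \<in> l2 \<and> (\<lambda>i. l * R x i - T (R x) i) = x"
    using bounded_op_l2[OF assms(1,4)] assms(3)[OF assms(4)] by blast
  fix y assume y: "y \<in> l2 \<and> (\<lambda>i. l * y i - T y i) = x"
  then have "R (\<lambda>i. l * y i - T y i) = y" using assms(2) by blast
  then show "y = R x" using y by simp
qed

lemma not_invertible_op_at_0:
  assumes "\<And>f. T f j = 0"
  shows "\<not> invertible_op (\<lambda>f i. 0 * f i - T f i)"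
proof
  assume "invertible_op (\<lambda>f i. 0 * f i - T f i)"
  then obtain R where R: "\<forall>f\<in>l2. R (\<lambda>i. 0 * f i - T f i) = f \<and> (\<lambda>i. 0 * R f i - T (R f) i) = f"
    unfolding invertible_op_def by (elim conjE exE)
  have "(\<lambda>i. 0 * R (basis_vec j) i - T (R (basis_vec j)) i) = basis_vec j"
    using R[rule_format, OF basis_vec_l2] by (rule conjunct2)
  then have "(\<lambda>i. 0 * R (basis_vec j) i - T (R (basis_vec j)) i) j = basis_vec j j"
    by (rule fun_cong)
  then show False using assms by (simp add: basis_vec_def)
qed

lemma quasinilpotentI:
  assumes "bounded_op T" "\<And>l. l \<noteq> 0 \<Longrightarrow> invertible_op (\<lambda>f i. l * f i - T f i)" "\<And>f. T f j = 0"
  shows "quasinilpotent T"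
proof -
  have "l \<in> op_spectrum T \<longleftrightarrow> l = 0" for l
    using assms(2)[of l] not_invertible_op_at_0[of T j] assms(3)
    unfolding op_spectrum_def by (cases "l = 0") simp_all
  then show ?thesis unfolding quasinilpotent_def using assms(1) by blast
qed

lemma kx_eq_Limsup:
  assumes "\<And>l y. l \<noteq> 0 \<Longrightarrow> y \<in> l2 \<Longrightarrow> resolvent T l y = R l y" "x \<in> l2"
  shows "kx T x = Limsup (at 0) (\<lambda>l. ereal (ln (l2norm (R l x)) / ln (opnorm (R l))))"
  unfolding kx_def
proof (rule Limsup_eq)
  have "eventually (\<lambda>l::complex. l \<noteq> 0) (at 0)" by (simp add: eventually_at_filter)
  then show "\<forall>\<^sub>F l in at 0. ereal (ln (l2norm (resolvent T l x)) / ln (opnorm (resolvent T l)))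
      = ereal (ln (l2norm (R l x)) / ln (opnorm (R l)))"
  proof eventually_elim
    case (elim l)
    have "opnorm (resolvent T l) = opnorm (R l)" by (rule opnorm_cong) (rule assms(1)[OF elim])
    then show ?case using assms(1)[OF elim assms(2)] by simp
  qed
qed


section \<open>Limits of logarithmic ratios\<close>

lemma Limsup_mono_filter:
  assumes "F \<le> G"
  shows "Limsup F f \<le> Limsup G f"
  unfolding Limsup_def by (rule INF_superset_mono) (use assms in \<open>auto simp: le_filter_def\<close>)

lemma ereal_le_Limsup_along:
  fixes f h :: "_ \<Rightarrow> real"
  assumes g: "filterlim g F G" and "G \<noteq> bot"
    and "eventually (\<lambda>t. h t \<le> f (g t)) G" and "(h \<longlongrightarrow> L) G"
  shows "ereal L \<le> Limsup F (\<lambda>l. ereal (f l))"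
proof -
  have "((\<lambda>t. ereal (h t)) \<longlongrightarrow> ereal L) G" using assms(4) by (rule tendsto_ereal)
  then have "ereal L = Limsup G (\<lambda>t. ereal (h t))" using assms(2) lim_imp_Limsup by metis
  also have "\<dots> \<le> Limsup G (\<lambda>t. ereal (f (g t)))"
    by (rule Limsup_mono) (use assms(3) in \<open>auto elim: eventually_mono\<close>)
  also have "\<dots> \<le> Limsup (filtermap g G) (\<lambda>l. ereal (f l))"
    by (rule Limsup_filtermap_ge)
  also have "\<dots> \<le> Limsup F (\<lambda>l. ereal (f l))"
    by (rule Limsup_mono_filter) (use g in \<open>simp add: filterlim_def\<close>)
  finally show ?thesis .
qed

lemma ereal_le_Limsup_at_0_circles:
  fixes f :: "complex \<Rightarrow> real" and h :: "real \<Rightarrow> real"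
  assumes "eventually (\<lambda>R. \<exists>l. cmod l = 1 / R \<and> h R \<le> f l) at_top" and "(h \<longlongrightarrow> L) at_top"
  shows "ereal L \<le> Limsup (at 0) (\<lambda>l. ereal (f l))"
proof -
  define g where "g R = (SOME l. cmod l = 1 / R \<and> h R \<le> f l)" for R
  have "eventually (\<lambda>R. cmod (g R) = 1 / R \<and> h R \<le> f (g R)) at_top"
    using assms(1) unfolding g_def by (rule eventually_mono) (rule someI_ex)
  then have ev: "eventually (\<lambda>R. (cmod (g R) = 1 / R \<and> h R \<le> f (g R)) \<and> R > 0) at_top"
    by (rule eventually_conj[OF _ eventually_gt_at_top])
  have "filterlim g (at 0) at_top"
  proof (rule filterlim_atI)
    have "((\<lambda>R::real. 1 / R) \<longlongrightarrow> 0) at_top" by real_asymp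
    then have "((\<lambda>R. norm (g R)) \<longlongrightarrow> 0) at_top"
      by (rule Lim_transform_eventually) (use ev in \<open>auto elim: eventually_mono\<close>)
    then show "(g \<longlongrightarrow> 0) at_top" by (rule tendsto_norm_zero_cancel)
    show "eventually (\<lambda>R. g R \<noteq> 0) at_top"
      using ev by eventually_elim auto
  qed
  then show ?thesis
    by (rule ereal_le_Limsup_along[OF _ _ _ assms(2)]) (use ev in \<open>auto elim: eventually_mono\<close>)
qed

lemma Limsup_ln_ratio_le_1:
  fixes u v :: "_ \<Rightarrow> real"
  assumes "F \<noteq> bot" and v: "filterlim v at_top F"
    and u: "eventually (\<lambda>l. 0 < u l \<and> u l \<le> v l * C) F"
  shows "Limsup F (\<lambda>l. ereal (ln (u l) / ln (v l))) \<le> 1"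
proof -
  define D where "D = max 0 (ln C)"
  have lnv: "filterlim (\<lambda>l. ln (v l)) at_top F"
    by (rule filterlim_compose[OF ln_at_top v])
  have "((\<lambda>l. 1 + D / ln (v l)) \<longlongrightarrow> 1 + 0) F"
    by (intro tendsto_add tendsto_const tendsto_divide_0[OF tendsto_const]
        filterlim_at_top_imp_at_infinity lnv)
  then have "((\<lambda>l. ereal (1 + D / ln (v l))) \<longlongrightarrow> ereal 1) F" by (intro tendsto_ereal) simp
  then have lim: "Limsup F (\<lambda>l. ereal (1 + D / ln (v l))) = 1"
    using assms(1) lim_imp_Limsup one_ereal_def by metis
  have "eventually (\<lambda>l. v l > 1) F" using v by (simp add: filterlim_at_top_dense)
  with u have "eventually (\<lambda>l. ln (u l) / ln (v l) \<le> 1 + D / ln (v l)) F"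
  proof eventually_elim
    case (elim l)
    then have "C > 0" by (smt (verit) mult_nonneg_nonpos)
    have "ln (u l) \<le> ln (v l * C)" using elim by simp
    also have "\<dots> \<le> ln (v l) + D" using elim \<open>C > 0\<close> by (simp add: ln_mult D_def)
    finally show ?case using elim by (simp add: field_simps)
  qed
  then have "Limsup F (\<lambda>l. ereal (ln (u l) / ln (v l))) \<le> Limsup F (\<lambda>l. ereal (1 + D / ln (v l)))"
    by (intro Limsup_mono) (auto elim: eventually_mono)
  then show ?thesis using lim by simp
qed

lemma ln_div_ln_le:
  fixes a b u v :: real
  assumes "1 \<le> a" "a \<le> u\<^sup>2" "u > 0" "1 < v" "v\<^sup>2 \<le> b"
  shows "ln a / ln b \<le> ln u / ln v"
proof -
  have "ln a \<le> ln (u\<^sup>2)" using assms(1,2) by (subst ln_le_cancel_iff) auto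
  also have "\<dots> = 2 * ln u" using assms(3) by (simp add: ln_realpow)
  finally have u: "ln a \<le> 2 * ln u" .
  have "2 * ln v = ln (v\<^sup>2)" using assms(4) by (simp add: ln_realpow)
  also have "\<dots> \<le> ln b"
    using assms(4,5) by (subst ln_le_cancel_iff) (auto intro: less_le_trans[of 0 "v\<^sup>2"])
  finally have v: "2 * ln v \<le> ln b" .
  have "0 \<le> 2 * ln u" using u ln_ge_zero[OF assms(1)] by linarith
  moreover have "0 < 2 * ln v" using assms(4) by simp
  ultimately have "ln a / ln b \<le> (2 * ln u) / (2 * ln v)" using frac_le u v by blast
  then show ?thesis by simp
qed

lemma tendsto_ln_ratio_sandwich:
  fixes u v lo up :: "_ \<Rightarrow> real"
  assumes "eventually (\<lambda>l. 1 \<le> u l \<and> 1 < lo l \<and> lo l \<le> v l \<and> v l \<le> up l) F"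
    and "((\<lambda>l. ln (u l) / ln (lo l)) \<longlongrightarrow> L) F" and "((\<lambda>l. ln (u l) / ln (up l)) \<longlongrightarrow> L) F"
  shows "((\<lambda>l. ln (u l) / ln (v l)) \<longlongrightarrow> L) F"
proof (rule tendsto_sandwich[OF _ _ assms(3,2)])
  show "eventually (\<lambda>l. ln (u l) / ln (up l) \<le> ln (u l) / ln (v l)) F"
    using assms(1) by eventually_elim (auto intro!: divide_left_mono mult_pos_pos)
  show "eventually (\<lambda>l. ln (u l) / ln (v l) \<le> ln (u l) / ln (lo l)) F"
    using assms(1) by eventually_elim (auto intro!: divide_left_mono mult_pos_pos)
qed

lemma filterlim_inverse_norm_at_0: "filterlim (\<lambda>l::complex. 1 / cmod l) at_top (at 0)"
proof -
  have "filterlim (\<lambda>l::complex. norm (inverse l)) at_top (at 0)"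
    by (rule filterlim_at_infinity_imp_norm_at_top[OF filterlim_inverse_at_infinity])
  then show ?thesis by (simp add: norm_inverse divide_inverse)
qed


section \<open>Elementary estimates\<close>

lemma sum_power_div_fact_le_exp:
  assumes "(t::real) \<ge> 0"
  shows "(\<Sum>m\<le>N. t ^ m / fact m) \<le> exp t"
proof -
  have s: "(\<lambda>m. t ^ m / fact m) sums exp t"
    using exp_converges[of t] by (simp add: divide_inverse mult.commute)
  then show ?thesis
    using sum_le_suminf[OF sums_summable[OF s], of "{..N}"] assms by (simp add: sums_iff)
qed

lemma eventually_exp_tail_ge:
  "eventually (\<lambda>t::real. \<exists>M\<ge>p. exp t / 2 \<le> (\<Sum>n\<in>{p..M}. t ^ n / fact n)) at_top"
proof -
  have "((\<lambda>t. real p * (1 + t) ^ p / exp t) \<longlongrightarrow> 0) at_top" by real_asymp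
  then have "eventually (\<lambda>t. real p * (1 + t) ^ p / exp t < 1/4) at_top"
    by (rule order_tendstoD) simp
  moreover have "eventually (\<lambda>t::real. t \<ge> 0) at_top" by (rule eventually_ge_at_top)
  ultimately show ?thesis
  proof eventually_elim
    case (elim t)
    have head: "(\<Sum>n<p. t ^ n / fact n) \<le> exp t / 4"
    proof -
      have "t ^ n / fact n \<le> (1 + t) ^ p" if "n < p" for n
      proof -
        have "t ^ n / fact n \<le> t ^ n" using elim by (simp add: divide_le_eq fact_ge_1 mult_le_cancel_left1)
        also have "\<dots> \<le> (1 + t) ^ p"
          using elim that by (intro order.trans[OF power_mono power_increasing]) auto
        finally show ?thesis .
      qed
      then have "(\<Sum>n<p. t ^ n / fact n) \<le> real p * (1 + t) ^ p"
        using sum_mono[of "{..<p}" "\<lambda>n. t ^ n / fact n" "\<lambda>_. (1 + t) ^ p"] by simp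
      also have "\<dots> \<le> exp t / 4" using elim by (simp add: divide_less_eq)
      finally show ?thesis .
    qed
    have "(\<lambda>M. \<Sum>n<M. t ^ n / fact n) \<longlonglongrightarrow> exp t"
      using exp_converges[of t] by (simp add: sums_def divide_inverse mult.commute)
    then have "eventually (\<lambda>M. 3/4 * exp t < (\<Sum>n<M. t ^ n / fact n)) sequentially"
      by (rule order_tendstoD) simp
    then obtain M0 where M0: "\<And>M. M \<ge> M0 \<Longrightarrow> 3/4 * exp t < (\<Sum>n<M. t ^ n / fact n)"
      by (auto simp: eventually_sequentially)
    define M where "M = max M0 p"
    have tail: "3/4 * exp t < (\<Sum>n<Suc M. t ^ n / fact n)" using M0[of "Suc M"] unfolding M_def by simp
    have "{..<Suc M} = {..<p} \<union> {p..M}" unfolding M_def by auto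
    then have "(\<Sum>n<Suc M. t ^ n / fact n) = (\<Sum>n<p. t ^ n / fact n) + (\<Sum>n\<in>{p..M}. t ^ n / fact n)"
      by (simp add: sum.union_disjoint ivl_disj_int)
    then have "exp t / 2 \<le> (\<Sum>n\<in>{p..M}. t ^ n / fact n)" using tail head by simp
    then show ?case unfolding M_def by (intro exI[of _ M]) (simp add: M_def)
  qed
qed

lemma fact_mult_fact_le:
  assumes "i \<le> n"
  shows "(fact i * fact (n - i) :: real) \<le> fact n"
proof -
  have "fact i * fact (n - i) * (n choose i) = (fact n :: nat)" by (rule binomial_fact_lemma[OF assms])
  moreover have "n choose i > 0" using assms by simp
  then have "fact i * fact (n - i) * 1 \<le> fact i * fact (n - i) * (n choose i)"
    by (intro mult_le_mono2) (use assms in \<open>simp add: Suc_leI\<close>)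
  ultimately have "fact i * fact (n - i) \<le> (fact n :: nat)" by simp
  then show ?thesis by (metis of_nat_fact of_nat_le_iff of_nat_mult)
qed

lemma sum_inverse_power_le:
  assumes "(q::real) > 1"
  shows "(\<Sum>i\<le>n. (1/q) ^ (n - i)) \<le> q / (q - 1)"
proof -
  have "(\<Sum>i\<le>n. (1/q) ^ (n - i)) = (\<Sum>i<Suc n. (1/q) ^ i)"
    using sum.nat_diff_reindex[of "\<lambda>i. (1/q) ^ i" "Suc n"] by (simp add: lessThan_Suc_atMost)
  also have "\<dots> = (1 - (1/q) ^ Suc n) / (1 - 1/q)" using assms by (subst sum_gp_strict) auto
  also have "\<dots> \<le> 1 / (1 - 1/q)" using assms by (intro divide_right_mono) auto
  also have "\<dots> = q / (q - 1)" using assms by (simp add: field_simps)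
  finally show ?thesis .
qed

text \<open>Cauchy--Schwarz against the geometric weights \<open>q ^ (n - i)\<close>.\<close>

lemma sum_convolution_squared_le:
  fixes y a :: "nat \<Rightarrow> real"
  assumes q: "q > 1" and y: "\<And>i. y i \<ge> 0" and a: "\<And>i. a i \<ge> 0"
  shows "(\<Sum>n\<le>N. (\<Sum>i\<le>n. y i * a (n - i))\<^sup>2)
           \<le> q / (q - 1) * (\<Sum>m\<le>N. q ^ m * (a m)\<^sup>2) * (\<Sum>i\<le>N. (y i)\<^sup>2)"
proof -
  define w where "w n i = (y i)\<^sup>2 * (q ^ (n - i) * (a (n - i))\<^sup>2)" for n i
  have w: "w n i \<ge> 0" for n i unfolding w_def using q by simp
  have step: "(\<Sum>i\<le>n. y i * a (n - i))\<^sup>2 \<le> q / (q - 1) * (\<Sum>i\<le>n. w n i)" for n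
  proof -
    have split: "y i * a (n - i) = sqrt ((1/q) ^ (n - i)) * (sqrt (q ^ (n - i)) * a (n - i) * y i)" for i
    proof -
      have "sqrt ((1/q) ^ (n - i)) * sqrt (q ^ (n - i)) = 1"
        using q by (simp add: real_sqrt_mult[symmetric] power_mult_distrib[symmetric])
      then show ?thesis by (metis mult.assoc mult.commute mult_1)
    qed
    have "(\<Sum>i\<le>n. y i * a (n - i))\<^sup>2
        \<le> (\<Sum>i\<le>n. (sqrt ((1/q) ^ (n - i)))\<^sup>2) * (\<Sum>i\<le>n. (sqrt (q ^ (n - i)) * a (n - i) * y i)\<^sup>2)"
      unfolding split by (rule Cauchy_Schwarz_ineq_sum)
    also have "\<dots> = (\<Sum>i\<le>n. (1/q) ^ (n - i)) * (\<Sum>i\<le>n. w n i)"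
      using q by (simp add: w_def power_mult_distrib mult_ac)
    also have "\<dots> \<le> q / (q - 1) * (\<Sum>i\<le>n. w n i)"
      by (rule mult_right_mono[OF sum_inverse_power_le[OF q]]) (simp add: w sum_nonneg)
    finally show ?thesis .
  qed
  have "(\<Sum>n\<le>N. (\<Sum>i\<le>n. y i * a (n - i))\<^sup>2) \<le> (\<Sum>n\<le>N. q / (q - 1) * (\<Sum>i\<le>n. w n i))"
    by (rule sum_mono) (rule step)
  also have "\<dots> = q / (q - 1) * (\<Sum>n\<le>N. \<Sum>i\<le>n. w n i)"
    by (simp add: sum_distrib_left)
  also have "\<dots> \<le> q / (q - 1) * ((\<Sum>m\<le>N. q ^ m * (a m)\<^sup>2) * (\<Sum>i\<le>N. (y i)\<^sup>2))"
  proof (rule mult_left_mono)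
    have "(\<Sum>n\<le>N. \<Sum>i\<le>n. w n i) = (\<Sum>(i, j)\<in>{(i, j). i + j \<le> N}. (y i)\<^sup>2 * (q ^ j * (a j)\<^sup>2))"
      unfolding w_def by (rule sum.triangle_reindex_eq[symmetric])
    also have "\<dots> \<le> (\<Sum>(i, j)\<in>{..N} \<times> {..N}. (y i)\<^sup>2 * (q ^ j * (a j)\<^sup>2))"
      by (rule sum_mono2) (use q in auto)
    also have "\<dots> = (\<Sum>m\<le>N. q ^ m * (a m)\<^sup>2) * (\<Sum>i\<le>N. (y i)\<^sup>2)"
      by (simp add: sum_product sum.cartesian_product mult_ac)
    finally show "(\<Sum>n\<le>N. \<Sum>i\<le>n. w n i) \<le> (\<Sum>m\<le>N. q ^ m * (a m)\<^sup>2) * (\<Sum>i\<le>N. (y i)\<^sup>2)" .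
  qed (use q in simp)
  finally show ?thesis by (simp add: mult_ac)
qed

lemma sum_roots_of_unity_orthogonal:
  fixes N a b :: nat
  assumes "a < N" "b < N"
  defines "\<omega> \<equiv> cis (2 * pi / N)"
  shows "(\<Sum>j<N. \<omega> ^ (j * a) * cnj (\<omega> ^ (j * b))) = (if a = b then of_nat N else 0)"
proof -
  have N: "N > 0" using assms(1) by simp
  have root: "\<omega> ^ k = cis (2 * pi * real k / real N)" for k
    unfolding \<omega>_def Complex.DeMoivre by (simp add: field_simps)
  have unit: "cnj (\<omega> ^ k) * \<omega> ^ k = 1" for k
    unfolding root by (simp add: cis_cnj cis_mult)
  define z where "z = \<omega> ^ a * cnj (\<omega> ^ b)"
  have terms: "\<omega> ^ (j * a) * cnj (\<omega> ^ (j * b)) = z ^ j" for j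
    unfolding z_def by (simp add: power_mult[symmetric] power_mult_distrib mult.commute)
  show ?thesis
  proof (cases "a = b")
    case True
    then have "z = 1" unfolding z_def using unit[of b] by (simp add: mult.commute)
    then show ?thesis unfolding terms using True by simp
  next
    case False
    have "z \<noteq> 1"
    proof
      assume "z = 1"
      have "\<omega> ^ a = \<omega> ^ a * (cnj (\<omega> ^ b) * \<omega> ^ b)" using unit[of b] by simp
      also have "\<dots> = z * \<omega> ^ b" by (simp add: z_def mult_ac)
      finally have "cis (2 * pi * real a / real N) = cis (2 * pi * real b / real N)"
        using \<open>z = 1\<close> unfolding root by simp
      moreover have "inj_on (\<lambda>k. cis (2 * pi * real k / real N)) {..<N}"
        using Complex.bij_betw_roots_unity[OF N] by (rule bij_betw_imp_inj_on)
      ultimately show False using False assms(1,2) by (auto dest: inj_onD)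
    qed
    moreover have "z ^ N = 1"
    proof -
      have "\<omega> ^ N = 1" unfolding root using N by simp
      moreover have "(\<omega> ^ k) ^ N = (\<omega> ^ N) ^ k" for k
        by (simp only: power_mult[symmetric] mult.commute)
      ultimately have "(\<omega> ^ k) ^ N = 1" for k by simp
      then show ?thesis unfolding z_def power_mult_distrib complex_cnj_power[symmetric] by simp
    qed
    ultimately have "(\<Sum>j<N. z ^ j) = 0" by (simp add: sum_gp_strict)
    then show ?thesis unfolding terms using False by simp
  qed
qed


lemma discrete_parseval:
  fixes co :: "'a \<Rightarrow> complex" and e :: "'a \<Rightarrow> nat"
  assumes I: "finite I" and inj: "inj_on e I" and e: "\<And>i. i \<in> I \<Longrightarrow> e i < N"
  shows "(\<Sum>j<N. (cmod (\<Sum>i\<in>I. co i * (of_real \<rho> * cis (2 * pi / N) ^ j) ^ e i))\<^sup>2)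
       = real N * (\<Sum>i\<in>I. (cmod (co i))\<^sup>2 * \<rho> ^ (2 * e i))"
proof -
  define w where "w = cis (2 * pi / N)"
  define A where "A i k = co i * cnj (co k) * of_real (\<rho> ^ (e i + e k))" for i k
  have u: "co i * (of_real \<rho> * w ^ j) ^ e i = of_real (\<rho> ^ e i) * co i * w ^ (j * e i)" for i j
    by (simp add: power_mult_distrib power_mult mult_ac)
  have "complex_of_real (\<Sum>j<N. (cmod (\<Sum>i\<in>I. co i * (of_real \<rho> * w ^ j) ^ e i))\<^sup>2)
      = (\<Sum>j<N. (\<Sum>i\<in>I. co i * (of_real \<rho> * w ^ j) ^ e i) * cnj (\<Sum>k\<in>I. co k * (of_real \<rho> * w ^ j) ^ e k))"
    by (simp only: of_real_sum complex_norm_square)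
  also have "\<dots> = (\<Sum>j<N. \<Sum>i\<in>I. \<Sum>k\<in>I. A i k * (w ^ (j * e i) * cnj (w ^ (j * e k))))"
    unfolding cnj_sum sum_product u A_def by (simp add: mult_ac power_add)
  also have "\<dots> = (\<Sum>i\<in>I. \<Sum>k\<in>I. A i k * (\<Sum>j<N. w ^ (j * e i) * cnj (w ^ (j * e k))))"
    by (simp add: sum_distrib_left sum.swap[of _ "{..<N}"])
  also have "\<dots> = (\<Sum>i\<in>I. \<Sum>k\<in>I. A i k * (if i = k then of_nat N else 0))"
  proof (intro sum.cong refl)
    fix i k assume "i \<in> I" "k \<in> I"
    then have "(e i = e k) = (i = k)" using inj by (auto simp: inj_on_def)
    then show "A i k * (\<Sum>j<N. w ^ (j * e i) * cnj (w ^ (j * e k))) = A i k * (if i = k then of_nat N else 0)"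
      unfolding w_def using sum_roots_of_unity_orthogonal[OF e[OF \<open>i \<in> I\<close>] e[OF \<open>k \<in> I\<close>]] by simp
  qed
  also have "\<dots> = (\<Sum>i\<in>I. A i i * of_nat N)"
    by (simp add: I if_distrib sum.delta cong: if_cong)
  also have "\<dots> = complex_of_real (real N * (\<Sum>i\<in>I. (cmod (co i))\<^sup>2 * \<rho> ^ (2 * e i)))"
    unfolding of_real_mult of_real_sum sum_distrib_left
  proof (intro sum.cong refl)
    fix i
    have "A i i = complex_of_real ((cmod (co i))\<^sup>2) * complex_of_real (\<rho> ^ (2 * e i))"
      unfolding A_def complex_norm_square mult_2 by simp
    then show "A i i * of_nat N
        = complex_of_real (real N) * (complex_of_real ((cmod (co i))\<^sup>2) * complex_of_real (\<rho> ^ (2 * e i)))"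
      by (simp only: of_real_of_nat_eq mult_ac)
  qed
  finally show ?thesis unfolding w_def by (simp only: of_real_eq_iff)
qed

lemma ex_ge_average:
  fixes X :: "nat \<Rightarrow> real"
  assumes "N > 0" "(\<Sum>j<N. X j) = real N * S"
  shows "\<exists>j<N. S \<le> X j"
proof (rule ccontr)
  assume "\<not> (\<exists>j<N. S \<le> X j)"
  then have "(\<Sum>j<N. X j) < (\<Sum>j<N. S)" using assms(1) by (intro sum_strict_mono) auto
  then show False using assms(2) by simp
qed


section \<open>The weighted shift and its resolvent\<close>

definition wshift :: "real \<Rightarrow> (nat \<Rightarrow> complex) \<Rightarrow> nat \<Rightarrow> complex" where
  "wshift c f n = (if n = 0 then 0 else complex_of_real (c / sqrt (real n)) * f (n - 1))"

text \<open>Forward substitution in \<open>l * y - wshift c y = x\<close>.\<close>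

fun wshift_res :: "real \<Rightarrow> complex \<Rightarrow> (nat \<Rightarrow> complex) \<Rightarrow> nat \<Rightarrow> complex" where
  "wshift_res c l x 0 = x 0 / l"
| "wshift_res c l x (Suc n) = (x (Suc n) + complex_of_real (c / sqrt (real (Suc n))) * wshift_res c l x n) / l"

lemma wshift_0 [simp]: "wshift c f 0 = 0"
  by (simp add: wshift_def)

lemma norm_wshift_le:
  assumes "c \<ge> 0"
  shows "cmod (wshift c f n) \<le> c * cmod (f (n - 1))"
proof (cases "n = 0")
  case False
  then have le: "c / sqrt (real n) \<le> c"
    using assms by (simp add: divide_le_eq mult_le_cancel_left1 Suc_leI)
  have "cmod (wshift c f n) = c / sqrt (real n) * cmod (f (n - 1))"
    using False assms by (simp add: wshift_def norm_mult norm_divide)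
  also have "\<dots> \<le> c * cmod (f (n - 1))" by (rule mult_right_mono[OF le]) simp
  finally show ?thesis .
qed (simp add: assms)

lemma wshift_l2:
  assumes "c \<ge> 0" "f \<in> l2"
  shows "wshift c f \<in> l2" and "l2norm (wshift c f) \<le> c * l2norm f"
proof -
  have fin: "(\<Sum>n\<in>F. (cmod (wshift c f n))\<^sup>2) \<le> (c * l2norm f)\<^sup>2" if F: "finite F" for F
  proof -
    have "(\<Sum>n\<in>F. (cmod (wshift c f n))\<^sup>2) = (\<Sum>n\<in>F - {0}. (cmod (wshift c f n))\<^sup>2)"
      by (rule sum.mono_neutral_right) (auto simp: F)
    also have "\<dots> \<le> (\<Sum>n\<in>F - {0}. c\<^sup>2 * (cmod (f (n - 1)))\<^sup>2)"
      using norm_wshift_le[OF assms(1)] by (intro sum_mono) (simp add: power_mono flip: power_mult_distrib)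
    also have "\<dots> = c\<^sup>2 * (\<Sum>m\<in>(\<lambda>n. n - 1) ` (F - {0}). (cmod (f m))\<^sup>2)"
      by (subst sum.reindex) (auto simp: inj_on_def sum_distrib_left)
    also have "\<dots> \<le> c\<^sup>2 * (l2norm f)\<^sup>2"
      by (intro mult_left_mono sum_le_l2norm_squared[OF assms(2)]) (use F in auto)
    finally show ?thesis by (simp add: power_mult_distrib)
  qed
  have "c * l2norm f \<ge> 0" using assms(1) l2norm_nonneg[of f] by simp
  from l2_finite_sums_le[OF fin this]
  show "wshift c f \<in> l2" "l2norm (wshift c f) \<le> c * l2norm f" by auto
qed

lemma wshift_lincomb: "wshift c (\<lambda>i. a * f i + g i) = (\<lambda>i. a * wshift c f i + wshift c g i)"
  by (auto simp: wshift_def fun_eq_iff algebra_simps)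

lemma bounded_op_wshift: "c \<ge> 0 \<Longrightarrow> bounded_op (wshift c)"
  by (rule bounded_opI) (use wshift_l2 wshift_lincomb in auto)

lemma wshift_res_eq: "l \<noteq> 0 \<Longrightarrow> l * wshift_res c l x n - wshift c (wshift_res c l x) n = x n"
  by (cases n) (auto simp: wshift_def)

lemma wshift_res_unique:
  assumes "l \<noteq> 0" "\<And>n. l * y n - wshift c y n = x n"
  shows "y = wshift_res c l x"
proof
  show "y n = wshift_res c l x n" for n
  proof (induction n)
    case 0
    then show ?case using assms(2)[of 0] assms(1) by (simp add: field_simps)
  next
    case (Suc n)
    then show ?case using assms(2)[of "Suc n"] assms(1) by (simp add: wshift_def field_simps)
  qed
qed

lemma wshift_res_lincomb:
  assumes "l \<noteq> 0"
  shows "wshift_res c l (\<lambda>i. a * f i + g i) = (\<lambda>i. a * wshift_res c l f i + wshift_res c l g i)"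
proof (rule wshift_res_unique[OF assms, symmetric])
  show "l * (a * wshift_res c l f n + wshift_res c l g n)
      - wshift c (\<lambda>i. a * wshift_res c l f i + wshift_res c l g i) n = a * f n + g n" for n
    using wshift_res_eq[OF assms, of c f n] wshift_res_eq[OF assms, of c g n]
    unfolding wshift_lincomb by (simp add: algebra_simps)
qed

definition res_coeff :: "real \<Rightarrow> nat \<Rightarrow> nat \<Rightarrow> real" where
  "res_coeff c n i = c ^ (n - i) * sqrt (fact i / fact n)"

lemma res_coeff_Suc:
  assumes "i \<le> n"
  shows "c / sqrt (real (Suc n)) * res_coeff c n i = res_coeff c (Suc n) i"
proof -
  have "fact (Suc n) = real (Suc n) * fact n" by simp
  then have "sqrt (fact i / fact (Suc n)) = sqrt (fact i / fact n) / sqrt (real (Suc n))"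
    by (simp add: real_sqrt_divide real_sqrt_mult)
  moreover have "Suc n - i = Suc (n - i)" using assms by simp
  ultimately show ?thesis unfolding res_coeff_def by simp
qed

lemma wshift_res_closed:
  "wshift_res c l x n = (\<Sum>i\<le>n. x i * of_real (res_coeff c n i) / l ^ (n - i + 1))"
proof (induction n)
  case 0
  then show ?case by (simp add: res_coeff_def)
next
  case (Suc n)
  define a where "a = complex_of_real (c / sqrt (real (Suc n)))"
  have "a * (x i * of_real (res_coeff c n i) / l ^ (n - i + 1)) / l
      = x i * of_real (res_coeff c (Suc n) i) / l ^ (Suc n - i + 1)" if "i \<le> n" for i
  proof -
    have "a * of_real (res_coeff c n i) = of_real (res_coeff c (Suc n) i)"
      unfolding a_def of_real_mult[symmetric] res_coeff_Suc[OF that] ..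
    moreover have "Suc n - i + 1 = Suc (n - i + 1)" using that by simp
    ultimately show ?thesis by (simp add: field_simps)
  qed
  then have "a * wshift_res c l x n / l
      = (\<Sum>i\<le>n. x i * of_real (res_coeff c (Suc n) i) / l ^ (Suc n - i + 1))"
    unfolding Suc sum_distrib_left sum_divide_distrib by (intro sum.cong) auto
  then show ?case by (simp add: a_def add_divide_distrib res_coeff_def)
qed


definition res_majorant :: "real \<Rightarrow> real \<Rightarrow> nat \<Rightarrow> real" where
  "res_majorant c r m = c ^ m * r ^ (m + 1) / sqrt (fact m)"

lemma res_coeff_le:
  assumes "c \<ge> 0" "i \<le> n"
  shows "res_coeff c n i \<le> c ^ (n - i) / sqrt (fact (n - i))"
proof -
  have "fact i / fact n \<le> 1 / (fact (n - i) :: real)"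
    using fact_mult_fact_le[OF assms(2)] by (simp add: field_simps)
  then have "sqrt (fact i / fact n) \<le> 1 / sqrt (fact (n - i))"
    by (metis real_sqrt_divide real_sqrt_le_iff real_sqrt_one)
  then show ?thesis
    unfolding res_coeff_def using assms(1) by (simp add: mult_left_mono divide_inverse)
qed

lemma norm_wshift_res_le:
  assumes "c \<ge> 0" "l \<noteq> 0"
  shows "cmod (wshift_res c l x n) \<le> (\<Sum>i\<le>n. cmod (x i) * res_majorant c (1 / cmod l) (n - i))"
  unfolding wshift_res_closed
proof (rule order.trans[OF norm_sum sum_mono])
  fix i assume "i \<in> {..n}"
  then have le: "res_coeff c n i \<le> c ^ (n - i) / sqrt (fact (n - i))" by (simp add: res_coeff_le assms(1))
  have "res_coeff c n i \<ge> 0" using assms(1) by (simp add: res_coeff_def)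
  then have "cmod (x i * of_real (res_coeff c n i) / l ^ (n - i + 1))
      = cmod (x i) * (res_coeff c n i * (1 / cmod l) ^ (n - i + 1))"
    by (simp add: norm_mult norm_divide norm_power power_one_over)
  also have "\<dots> \<le> cmod (x i) * (c ^ (n - i) / sqrt (fact (n - i)) * (1 / cmod l) ^ (n - i + 1))"
    by (intro mult_left_mono mult_right_mono le) simp_all
  also have "\<dots> = cmod (x i) * res_majorant c (1 / cmod l) (n - i)"
    by (simp add: res_majorant_def)
  finally show "cmod (x i * of_real (res_coeff c n i) / l ^ (n - i + 1))
      \<le> cmod (x i) * res_majorant c (1 / cmod l) (n - i)" .
qed

lemma sum_res_majorant_squared:
  assumes "c \<ge> 0" "r \<ge> 0" "q > 0"
  shows "(\<Sum>m\<le>N. q ^ m * (res_majorant c r m)\<^sup>2) \<le> r\<^sup>2 * exp (q * c\<^sup>2 * r\<^sup>2)"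
proof -
  have "q ^ m * (res_majorant c r m)\<^sup>2 = r\<^sup>2 * ((q * c\<^sup>2 * r\<^sup>2) ^ m / fact m)" for m
    unfolding res_majorant_def
    by (simp add: power_divide power_mult_distrib power_add flip: power_mult)
       (simp add: power_mult mult.commute)
  then have "(\<Sum>m\<le>N. q ^ m * (res_majorant c r m)\<^sup>2) = r\<^sup>2 * (\<Sum>m\<le>N. (q * c\<^sup>2 * r\<^sup>2) ^ m / fact m)"
    by (simp add: sum_distrib_left)
  also have "\<dots> \<le> r\<^sup>2 * exp (q * c\<^sup>2 * r\<^sup>2)"
    using assms by (intro mult_left_mono sum_power_div_fact_le_exp) auto
  finally show ?thesis .
qed

definition res_bound :: "real \<Rightarrow> real \<Rightarrow> real" where
  "res_bound c r = sqrt ((c\<^sup>2 * r\<^sup>2 + 2) * r\<^sup>2 * exp (c\<^sup>2 * r\<^sup>2 + 1))"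

lemma res_bound_nonneg: "res_bound c r \<ge> 0"
  unfolding res_bound_def by simp

lemma res_bound_mono:
  assumes "0 \<le> c" "c \<le> c'"
  shows "res_bound c r \<le> res_bound c' r"
proof -
  have "c\<^sup>2 * r\<^sup>2 \<le> c'\<^sup>2 * r\<^sup>2" using assms by (intro mult_right_mono power_mono) auto
  then show ?thesis unfolding res_bound_def by (intro real_sqrt_le_mono mult_mono) auto
qed

text \<open>With the weight \<open>q = 1 + 1 / (c\<^sup>2 r\<^sup>2 + 1)\<close> the convolution inequality loses only the factor
  \<open>(c\<^sup>2 r\<^sup>2 + 2) e\<close> against the growth \<open>r\<^sup>2 exp (c\<^sup>2 r\<^sup>2)\<close> of the resolvent at the first basis vector.\<close>

lemma wshift_res_l2:
  assumes c: "c \<ge> 0" and l: "l \<noteq> 0" and x: "x \<in> l2"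
  shows "wshift_res c l x \<in> l2" and "l2norm (wshift_res c l x) \<le> res_bound c (1 / cmod l) * l2norm x"
proof -
  define r where "r = 1 / cmod l"
  define t where "t = c\<^sup>2 * r\<^sup>2"
  define q where "q = 1 + 1 / (t + 1)"
  have r: "r \<ge> 0" and t: "t \<ge> 0" unfolding r_def t_def by simp_all
  have q: "q > 1" unfolding q_def using t by simp
  have q_ratio: "q / (q - 1) = t + 2" unfolding q_def using t by (simp add: field_simps)
  have "q * c\<^sup>2 * r\<^sup>2 = t + t / (t + 1)" unfolding q_def t_def by (simp add: algebra_simps)
  also have "\<dots> \<le> t + 1" using t by simp
  finally have q_exp: "q * c\<^sup>2 * r\<^sup>2 \<le> t + 1" .
  have "(\<Sum>n\<in>F. (cmod (wshift_res c l x n))\<^sup>2) \<le> (res_bound c r * l2norm x)\<^sup>2" if F: "finite F" for F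
  proof -
    obtain N where N: "F \<subseteq> {..N}" using F finite_nat_iff_bounded_le by auto
    have maj: "(\<Sum>m\<le>N. q ^ m * (res_majorant c r m)\<^sup>2) \<le> r\<^sup>2 * exp (t + 1)"
    proof -
      have "(\<Sum>m\<le>N. q ^ m * (res_majorant c r m)\<^sup>2) \<le> r\<^sup>2 * exp (q * c\<^sup>2 * r\<^sup>2)"
        using q by (intro sum_res_majorant_squared c r) simp
      also have "\<dots> \<le> r\<^sup>2 * exp (t + 1)" using q_exp by (intro mult_left_mono) simp_all
      finally show ?thesis .
    qed
    have "(\<Sum>n\<in>F. (cmod (wshift_res c l x n))\<^sup>2) \<le> (\<Sum>n\<le>N. (cmod (wshift_res c l x n))\<^sup>2)"
      by (rule sum_mono2) (use N in auto)
    also have "\<dots> \<le> (\<Sum>n\<le>N. (\<Sum>i\<le>n. cmod (x i) * res_majorant c r (n - i))\<^sup>2)"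
      unfolding r_def by (intro sum_mono power_mono norm_wshift_res_le[OF c l]) simp
    also have "\<dots> \<le> q / (q - 1) * (\<Sum>m\<le>N. q ^ m * (res_majorant c r m)\<^sup>2) * (\<Sum>i\<le>N. (cmod (x i))\<^sup>2)"
      by (rule sum_convolution_squared_le[OF q]) (simp_all add: res_majorant_def c r)
    also have "\<dots> \<le> (t + 2) * (r\<^sup>2 * exp (t + 1)) * (l2norm x)\<^sup>2"
    proof (intro mult_mono maj sum_le_l2norm_squared[OF x])
      show "0 \<le> (\<Sum>m\<le>N. q ^ m * (res_majorant c r m)\<^sup>2)" using q by (intro sum_nonneg) simp
    qed (simp_all add: q_ratio t sum_nonneg)
    also have "\<dots> = (res_bound c r * l2norm x)\<^sup>2"
      using t unfolding res_bound_def t_def by (simp add: power_mult_distrib)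
    finally show ?thesis .
  qed
  from l2_finite_sums_le[OF this] show "wshift_res c l x \<in> l2"
      "l2norm (wshift_res c l x) \<le> res_bound c (1 / cmod l) * l2norm x"
    unfolding r_def by (simp_all add: res_bound_nonneg l2norm_nonneg)
qed

lemma bounded_op_wshift_res: "c \<ge> 0 \<Longrightarrow> l \<noteq> 0 \<Longrightarrow> bounded_op (wshift_res c l)"
  by (rule bounded_opI) (use wshift_res_l2 wshift_res_lincomb in auto)

lemma wshift_res_inverse:
  assumes "l \<noteq> 0"
  shows "wshift_res c l (\<lambda>i. l * f i - wshift c f i) = f"
    and "(\<lambda>i. l * wshift_res c l f i - wshift c (wshift_res c l f) i) = f"
  using wshift_res_unique[OF assms] wshift_res_eq[OF assms] by auto

lemma resolvent_wshift:
  assumes "c \<ge> 0" "l \<noteq> 0" "x \<in> l2"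
  shows "resolvent (wshift c) l x = wshift_res c l x"
  by (rule resolvent_eqI[OF bounded_op_wshift_res wshift_res_inverse]) (use assms in auto)

lemma quasinilpotent_wshift: "c \<ge> 0 \<Longrightarrow> quasinilpotent (wshift c)"
  by (rule quasinilpotentI[where j = 0])
    (auto intro: bounded_op_wshift invertible_opI bounded_op_wshift_res wshift_res_inverse)


lemma norm_wshift_res_basis_vec_squared:
  assumes "c \<ge> 0"
  shows "(cmod (wshift_res c l (basis_vec 0) n))\<^sup>2 = (1 / cmod l)\<^sup>2 * ((c\<^sup>2 * (1 / cmod l)\<^sup>2) ^ n / fact n)"
proof -
  have "basis_vec 0 i * of_real (res_coeff c n i) / l ^ (n - i + 1)
      = (if i = 0 then of_real (res_coeff c n 0) / l ^ (n + 1) else 0)" for i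
    by (simp add: basis_vec_def)
  then have "wshift_res c l (basis_vec 0) n = of_real (res_coeff c n 0) / l ^ (n + 1)"
    unfolding wshift_res_closed by simp
  then have "cmod (wshift_res c l (basis_vec 0) n) = c ^ n / sqrt (fact n) * (1 / cmod l) ^ (n + 1)"
    using assms by (simp add: res_coeff_def norm_divide norm_power norm_mult power_one_over real_sqrt_divide)
  then show ?thesis
    by (simp add: power_mult_distrib power_divide power_add flip: power_mult) (simp add: power_mult mult.commute)
qed

lemma l2norm_wshift_res_basis_vec:
  assumes "c \<ge> 0" "l \<noteq> 0"
  shows "l2norm (wshift_res c l (basis_vec 0)) = 1 / cmod l * exp (c\<^sup>2 * (1 / cmod l)\<^sup>2 / 2)"
proof -
  define r where "r = 1 / cmod l"
  have r: "r > 0" unfolding r_def using assms(2) by simp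
  have "(\<lambda>n. r\<^sup>2 * ((c\<^sup>2 * r\<^sup>2) ^ n / fact n)) sums (r\<^sup>2 * exp (c\<^sup>2 * r\<^sup>2))"
    using sums_mult[OF exp_converges[of "c\<^sup>2 * r\<^sup>2"], of "r\<^sup>2"] by (simp add: divide_inverse mult.commute)
  then have "((\<lambda>n. (cmod (wshift_res c l (basis_vec 0) n))\<^sup>2) has_sum (r\<^sup>2 * exp (c\<^sup>2 * r\<^sup>2))) UNIV"
    unfolding norm_wshift_res_basis_vec_squared[OF assms(1)] r_def[symmetric]
    by (rule sums_nonneg_imp_has_sum) simp
  then have "(l2norm (wshift_res c l (basis_vec 0)))\<^sup>2 = (r * exp (c\<^sup>2 * r\<^sup>2 / 2))\<^sup>2"
    unfolding l2norm_squared by (simp add: infsumI power_mult_distrib flip: exp_of_nat_mult)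
  moreover have "r * exp (c\<^sup>2 * r\<^sup>2 / 2) \<ge> 0" using r by simp
  ultimately show ?thesis
    unfolding r_def[symmetric] using power2_eq_iff_nonneg[OF l2norm_nonneg] by blast
qed

lemma opnorm_wshift_res_ge:
  assumes "c \<ge> 0" "l \<noteq> 0"
  shows "1 / cmod l * exp (c\<^sup>2 * (1 / cmod l)\<^sup>2 / 2) \<le> opnorm (wshift_res c l)"
  using l2norm_le_opnorm[OF bounded_op_wshift_res[OF assms] basis_vec_l2[of 0]]
  by (simp add: l2norm_basis_vec l2norm_wshift_res_basis_vec[OF assms])

lemma opnorm_wshift_res_le:
  assumes "c \<ge> 0" "l \<noteq> 0"
  shows "opnorm (wshift_res c l) \<le> res_bound c (1 / cmod l)"
  by (rule opnorm_le[OF wshift_res_l2(2)[OF assms] res_bound_nonneg])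


section \<open>Growth of the resolvent on circles\<close>

text \<open>On the circle \<open>|l| = 1/R\<close> the coordinates of the resolvent are polynomials in \<open>1/l\<close> of degree
  at most \<open>M + 1\<close>, so their mean square over the \<open>(M + 2)\<close>-th roots of unity is the sum of
  the squared moduli of their coefficients; some point of the circle is at least average.\<close>

lemma wshift_res_circle_ge:
  assumes R: "R > 0"
  shows "\<exists>l. cmod l = 1 / R \<and>
    (\<Sum>n\<le>M. \<Sum>i\<le>n. (cmod (x i))\<^sup>2 * (res_coeff c n i)\<^sup>2 * R ^ (2 * (n - i + 1)))
      \<le> (\<Sum>n\<le>M. (cmod (wshift_res c l x n))\<^sup>2)"
proof -
  define N where "N = M + 2"
  define w where "w = cis (2 * pi / N)"
  define L where "L j = 1 / (of_real R * w ^ j)" for j :: nat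
  define S where "S n = (\<Sum>i\<le>n. (cmod (x i))\<^sup>2 * (res_coeff c n i)\<^sup>2 * R ^ (2 * (n - i + 1)))" for n
  have N: "N > 0" unfolding N_def by simp
  have div_L: "a / L j ^ k = a * (of_real R * w ^ j) ^ k" for a j k
  proof -
    have "1 / L j = of_real R * w ^ j" unfolding L_def by simp
    then show ?thesis by (metis divide_inverse power_one_over mult_1)
  qed
  then have res_L: "wshift_res c (L j) x n
      = (\<Sum>i\<le>n. (x i * of_real (res_coeff c n i)) * (of_real R * w ^ j) ^ (n - i + 1))" for j n
    unfolding wshift_res_closed by (simp only: div_L)
  have "(\<Sum>j<N. (cmod (wshift_res c (L j) x n))\<^sup>2) = real N * S n" if "n \<le> M" for n
  proof -
    have "(\<Sum>j<N. (cmod (wshift_res c (L j) x n))\<^sup>2)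
        = real N * (\<Sum>i\<le>n. (cmod (x i * of_real (res_coeff c n i)))\<^sup>2 * R ^ (2 * (n - i + 1)))"
      unfolding res_L w_def by (rule discrete_parseval) (use that in \<open>auto simp: N_def inj_on_def\<close>)
    then show ?thesis by (simp add: S_def norm_mult power_mult_distrib)
  qed
  then have "(\<Sum>n\<le>M. \<Sum>j<N. (cmod (wshift_res c (L j) x n))\<^sup>2) = (\<Sum>n\<le>M. real N * S n)"
    by (intro sum.cong) auto
  then have "(\<Sum>j<N. \<Sum>n\<le>M. (cmod (wshift_res c (L j) x n))\<^sup>2) = real N * (\<Sum>n\<le>M. S n)"
    by (simp add: sum.swap[of _ "{..<N}"] sum_distrib_left)
  then obtain j where "(\<Sum>n\<le>M. S n) \<le> (\<Sum>n\<le>M. (cmod (wshift_res c (L j) x n))\<^sup>2)"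
    using ex_ge_average[OF N] by blast
  moreover have "cmod (L j) = 1 / R"
    unfolding L_def w_def using R by (simp add: norm_divide norm_mult norm_power)
  ultimately show ?thesis unfolding S_def by blast
qed

lemma res_coeff_squared:
  assumes "c > 0" "R > 0" "p \<le> n"
  shows "(res_coeff c n p)\<^sup>2 * R ^ (2 * (n - p + 1))
      = fact p / c ^ (2 * p) * R\<^sup>2 / R ^ (2 * p) * ((c\<^sup>2 * R\<^sup>2) ^ n / fact n)"
proof -
  have "c ^ (2 * (n - p)) = c ^ (2 * n) / c ^ (2 * p)" and "R ^ (2 * (n - p)) = R ^ (2 * n) / R ^ (2 * p)"
    using assms by (simp_all add: power_diff diff_mult_distrib2)
  moreover have "2 * (n - p + 1) = 2 * (n - p) + 2" by simp
  ultimately show ?thesis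
    unfolding res_coeff_def using assms
    by (simp add: power_mult_distrib power_add field_simps flip: power_mult) (simp add: power2_eq_square)
qed

lemma wshift_res_circle_ge_coordinate:
  assumes c: "c > 0" and R: "R > 0" and x: "x \<in> l2"
  shows "\<exists>l. cmod l = 1 / R \<and>
    (cmod (x p))\<^sup>2 * (fact p / c ^ (2 * p) * R\<^sup>2 / R ^ (2 * p)) * (\<Sum>n\<in>{p..M}. (c\<^sup>2 * R\<^sup>2) ^ n / fact n)
      \<le> (l2norm (wshift_res c l x))\<^sup>2"
proof -
  define T where "T n i = (cmod (x i))\<^sup>2 * (res_coeff c n i)\<^sup>2 * R ^ (2 * (n - i + 1))" for n i
  obtain l where l: "cmod l = 1 / R" and circle: "(\<Sum>n\<le>M. \<Sum>i\<le>n. T n i) \<le> (\<Sum>n\<le>M. (cmod (wshift_res c l x n))\<^sup>2)"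
    using wshift_res_circle_ge[OF R] unfolding T_def by blast
  have l0: "l \<noteq> 0" using l R by auto
  have "(cmod (x p))\<^sup>2 * (fact p / c ^ (2 * p) * R\<^sup>2 / R ^ (2 * p)) * (\<Sum>n\<in>{p..M}. (c\<^sup>2 * R\<^sup>2) ^ n / fact n)
      = (\<Sum>n\<in>{p..M}. T n p)"
    unfolding sum_distrib_left
  proof (rule sum.cong[OF refl])
    fix n assume "n \<in> {p..M}"
    then have "p \<le> n" by simp
    show "(cmod (x p))\<^sup>2 * (fact p / c ^ (2 * p) * R\<^sup>2 / R ^ (2 * p)) * ((c\<^sup>2 * R\<^sup>2) ^ n / fact n) = T n p"
      unfolding T_def mult.assoc res_coeff_squared[OF c R \<open>p \<le> n\<close>] ..
  qed
  also have "\<dots> \<le> (\<Sum>n\<in>{p..M}. \<Sum>i\<le>n. T n i)"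
  proof (rule sum_mono)
    fix n assume "n \<in> {p..M}"
    then show "T n p \<le> (\<Sum>i\<le>n. T n i)" using R by (intro member_le_sum) (auto simp: T_def)
  qed
  also have "\<dots> \<le> (\<Sum>n\<le>M. \<Sum>i\<le>n. T n i)"
    using R by (intro sum_mono2) (auto simp: T_def intro!: sum_nonneg)
  also have "\<dots> \<le> (\<Sum>n\<le>M. (cmod (wshift_res c l x n))\<^sup>2)" by (rule circle)
  also have "\<dots> \<le> (l2norm (wshift_res c l x))\<^sup>2"
    by (rule sum_le_l2norm_squared[OF wshift_res_l2(1)[OF less_imp_le[OF c] l0 x]]) simp
  finally show ?thesis using l by blast
qed

lemma eventually_wshift_res_ge:
  assumes c: "c > 0" and x: "x \<in> l2"
  shows "eventually (\<lambda>R. \<exists>l. cmod l = 1 / R \<and>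
    (cmod (x p))\<^sup>2 * (fact p / c ^ (2 * p) * R\<^sup>2 / R ^ (2 * p)) * (exp (c\<^sup>2 * R\<^sup>2) / 2)
      \<le> (l2norm (wshift_res c l x))\<^sup>2) at_top"
proof -
  have "filterlim (\<lambda>R. c\<^sup>2 * R\<^sup>2) at_top at_top" using c by real_asymp
  with eventually_exp_tail_ge[of p]
  have "eventually (\<lambda>R. \<exists>M\<ge>p. exp (c\<^sup>2 * R\<^sup>2) / 2 \<le> (\<Sum>n\<in>{p..M}. (c\<^sup>2 * R\<^sup>2) ^ n / fact n)) at_top"
    by (rule eventually_compose_filterlim)
  moreover have "eventually (\<lambda>R::real. R > 0) at_top" by (rule eventually_gt_at_top)
  ultimately show ?thesis
  proof eventually_elim
    case (elim R)
    define K where "K = (cmod (x p))\<^sup>2 * (fact p / c ^ (2 * p) * R\<^sup>2 / R ^ (2 * p))"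
    have K: "K \<ge> 0" unfolding K_def using c \<open>R > 0\<close> by simp
    obtain M where M: "exp (c\<^sup>2 * R\<^sup>2) / 2 \<le> (\<Sum>n\<in>{p..M}. (c\<^sup>2 * R\<^sup>2) ^ n / fact n)"
      using elim by blast
    obtain l where "cmod l = 1 / R"
      and "K * (\<Sum>n\<in>{p..M}. (c\<^sup>2 * R\<^sup>2) ^ n / fact n) \<le> (l2norm (wshift_res c l x))\<^sup>2"
      using wshift_res_circle_ge_coordinate[OF c \<open>R > 0\<close> x] unfolding K_def by blast
    moreover have "K * (exp (c\<^sup>2 * R\<^sup>2) / 2) \<le> K * (\<Sum>n\<in>{p..M}. (c\<^sup>2 * R\<^sup>2) ^ n / fact n)"
      by (rule mult_left_mono[OF M K])
    ultimately show ?case unfolding K_def by (meson order.trans)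
  qed
qed


section \<open>The power set of the weighted shift\<close>

lemma wshift_res_nonzero:
  assumes "l \<noteq> 0" "x \<noteq> (\<lambda>_. 0)"
  shows "wshift_res c l x \<noteq> (\<lambda>_. 0)"
proof
  assume "wshift_res c l x = (\<lambda>_. 0)"
  then have "x n = 0" for n
    using wshift_res_eq[OF assms(1), of c x n] by (auto simp: wshift_def split: if_splits)
  then show False using assms(2) by auto
qed

lemma kx_wshift_eq_Limsup:
  assumes "c \<ge> 0" "x \<in> l2"
  shows "kx (wshift c) x
    = Limsup (at 0) (\<lambda>l. ereal (ln (l2norm (wshift_res c l x)) / ln (opnorm (wshift_res c l))))"
  by (rule kx_eq_Limsup[OF _ assms(2)]) (use resolvent_wshift assms(1) in auto)

lemma kx_wshift_le_1:
  assumes c: "c \<ge> 0" and x: "x \<in> l2" "x \<noteq> (\<lambda>_. 0)"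
  shows "kx (wshift c) x \<le> 1"
  unfolding kx_wshift_eq_Limsup[OF c x(1)]
proof (rule Limsup_ln_ratio_le_1)
  have nonzero: "eventually (\<lambda>l::complex. l \<noteq> 0) (at 0)" by (simp add: eventually_at_filter)
  have "eventually (\<lambda>l. 1 / cmod l \<le> opnorm (wshift_res c l)) (at 0)"
    using nonzero
  proof eventually_elim
    case (elim l)
    have "1 \<le> exp (c\<^sup>2 * (1 / cmod l)\<^sup>2 / 2)" by simp
    then have "1 / cmod l * 1 \<le> 1 / cmod l * exp (c\<^sup>2 * (1 / cmod l)\<^sup>2 / 2)"
      by (rule mult_left_mono) simp
    then show ?case using opnorm_wshift_res_ge[OF c elim] by simp
  qed
  then show "filterlim (\<lambda>l. opnorm (wshift_res c l)) at_top (at 0)"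
    by (rule filterlim_at_top_mono[OF filterlim_inverse_norm_at_0])
  show "eventually (\<lambda>l. 0 < l2norm (wshift_res c l x)
      \<and> l2norm (wshift_res c l x) \<le> opnorm (wshift_res c l) * l2norm x) (at 0)"
    using nonzero
  proof eventually_elim
    case (elim l)
    show ?case
      using l2norm_pos[OF wshift_res_l2(1)[OF c elim x(1)] wshift_res_nonzero[OF elim x(2)]]
        l2norm_apply_le[OF bounded_op_wshift_res[OF c elim] x(1)] by blast
  qed
qed simp

lemma ln_ratio_wshift_res_ge:
  assumes c: "c > 0" and x: "x \<in> l2" "x \<noteq> (\<lambda>_. 0)" and l: "cmod l = 1 / R" "1 < R"
    and a: "1 \<le> a" "a \<le> (l2norm (wshift_res c l x))\<^sup>2"
  shows "ln a / ln ((res_bound c R)\<^sup>2) \<le> ln (l2norm (wshift_res c l x)) / ln (opnorm (wshift_res c l))"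
proof (rule ln_div_ln_le[OF a])
  have l0: "l \<noteq> 0" and R: "1 / cmod l = R" using l by auto
  show "l2norm (wshift_res c l x) > 0"
    by (intro l2norm_pos wshift_res_l2 wshift_res_nonzero less_imp_le[OF c] l0 x)
  have "R * 1 \<le> R * exp (c\<^sup>2 * R\<^sup>2 / 2)" using l(2) by (intro mult_left_mono) auto
  then show "1 < opnorm (wshift_res c l)"
    using opnorm_wshift_res_ge[OF less_imp_le[OF c] l0] l(2) unfolding R by linarith
  then show "(opnorm (wshift_res c l))\<^sup>2 \<le> (res_bound c R)\<^sup>2"
    using opnorm_wshift_res_le[OF less_imp_le[OF c] l0] unfolding R by (intro power_mono) auto
qed

lemma kx_wshift_ge_1:
  assumes c: "c > 0" and x: "x \<in> l2" "x \<noteq> (\<lambda>_. 0)"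
  shows "1 \<le> kx (wshift c) x"
proof -
  obtain p where p: "x p \<noteq> 0" using x(2) by auto
  define K where "K = (cmod (x p))\<^sup>2 * (fact p / c ^ (2 * p))"
  have K: "K > 0" using p c unfolding K_def by simp
  define lower where "lower R = K * R\<^sup>2 / R ^ (2 * p) * (exp (c\<^sup>2 * R\<^sup>2) / 2)" for R
  have "filterlim lower at_top at_top" unfolding lower_def using K c by real_asymp
  then have "eventually (\<lambda>R. 1 \<le> lower R \<and> 1 < R) at_top"
    by (intro eventually_conj eventually_gt_at_top) (simp add: filterlim_at_top)
  moreover have "eventually (\<lambda>R. \<exists>l. cmod l = 1 / R \<and> lower R \<le> (l2norm (wshift_res c l x))\<^sup>2) at_top"
    using eventually_wshift_res_ge[OF c x(1), of p] unfolding lower_def K_def by (simp add: mult_ac)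
  ultimately have "eventually (\<lambda>R. \<exists>l. cmod l = 1 / R \<and> ln (lower R) / ln ((res_bound c R)\<^sup>2)
      \<le> ln (l2norm (wshift_res c l x)) / ln (opnorm (wshift_res c l))) at_top"
    by eventually_elim (use ln_ratio_wshift_res_ge[OF c x] in blast)
  moreover have "((\<lambda>R. ln (lower R) / ln ((res_bound c R)\<^sup>2)) \<longlongrightarrow> 1) at_top"
    unfolding lower_def res_bound_def using K c by real_asymp
  ultimately have "ereal 1 \<le> Limsup (at 0)
      (\<lambda>l. ereal (ln (l2norm (wshift_res c l x)) / ln (opnorm (wshift_res c l))))"
    by (rule ereal_le_Limsup_at_0_circles)
  then show ?thesis unfolding kx_wshift_eq_Limsup[OF less_imp_le[OF c] x(1)] by (simp add: one_ereal_def)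
qed

lemma kx_wshift:
  assumes "c > 0" "x \<in> l2" "x \<noteq> (\<lambda>_. 0)"
  shows "kx (wshift c) x = 1"
  using kx_wshift_le_1[OF less_imp_le[OF assms(1)] assms(2,3)] kx_wshift_ge_1[OF assms] by simp

lemma power_set_wshift:
  assumes "c > 0"
  shows "power_set (wshift c) = {1}"
proof
  show "power_set (wshift c) \<subseteq> {1}"
    unfolding power_set_def using kx_wshift[OF assms] by auto
  have "kx (wshift c) (basis_vec 0) = 1"
    by (rule kx_wshift[OF assms basis_vec_l2 basis_vec_nonzero])
  then show "{1} \<subseteq> power_set (wshift c)"
    unfolding power_set_def using basis_vec_l2 basis_vec_nonzero by force
qed


section \<open>Direct sums\<close>

lemma direct_sum_apply: "direct_sum B x (k, m) = B k (\<lambda>m. x (k, m)) m"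
  unfolding direct_sum_def by simp

lemma slice_l2:
  assumes "x \<in> l2"
  shows "(\<lambda>m. x (k, m)) \<in> l2"
proof -
  have "(\<Sum>m\<in>F. (cmod (x (k, m)))\<^sup>2) \<le> (l2norm x)\<^sup>2" if "finite F" for F
  proof -
    have "(\<Sum>m\<in>F. (cmod (x (k, m)))\<^sup>2) = (\<Sum>z\<in>Pair k ` F. (cmod (x z))\<^sup>2)"
      by (subst sum.reindex) (auto simp: inj_on_def)
    also have "\<dots> \<le> (l2norm x)\<^sup>2" by (rule sum_le_l2norm_squared[OF assms]) (use that in auto)
    finally show ?thesis .
  qed
  from l2_finite_sums_le(1)[OF this l2norm_nonneg] show ?thesis .
qed

lemma sum_l2norm_slices_le:
  assumes x: "x \<in> l2" and K: "finite K"
  shows "(\<Sum>k\<in>K. (l2norm (\<lambda>m. x (k, m)))\<^sup>2) \<le> (l2norm x)\<^sup>2"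
proof -
  define g where "g z = (cmod (x z))\<^sup>2" for z
  have g: "g summable_on UNIV" using x unfolding l2_def g_def by simp
  then have gK: "g summable_on (K \<times> UNIV)" by (rule summable_on_subset_banach) simp
  have "(\<Sum>k\<in>K. (l2norm (\<lambda>m. x (k, m)))\<^sup>2) = (\<Sum>\<^sub>\<infinity>k\<in>K. \<Sum>\<^sub>\<infinity>m. g (k, m))"
    using K unfolding l2norm_squared g_def by simp
  also have "\<dots> = (\<Sum>\<^sub>\<infinity>z\<in>K \<times> UNIV. g z)" by (rule infsum_Sigma_banach[OF gK])
  also have "\<dots> \<le> (\<Sum>\<^sub>\<infinity>z. g z)" by (rule infsum_mono_neutral[OF gK g]) (auto simp: g_def)
  also have "\<dots> = (l2norm x)\<^sup>2" unfolding l2norm_squared g_def ..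
  finally show ?thesis .
qed

lemma direct_sum_l2:
  assumes B: "\<And>k f. f \<in> l2 \<Longrightarrow> B k f \<in> l2" "\<And>k f. f \<in> l2 \<Longrightarrow> l2norm (B k f) \<le> C * l2norm f"
    and C: "C \<ge> 0" and x: "x \<in> l2"
  shows "direct_sum B x \<in> l2" and "l2norm (direct_sum B x) \<le> C * l2norm x"
proof -
  have fin: "(\<Sum>z\<in>F. (cmod (direct_sum B x z))\<^sup>2) \<le> (C * l2norm x)\<^sup>2" if F: "finite F" for F
  proof -
    define K where "K = fst ` F"
    define M where "M = snd ` F"
    have KM: "finite K" "finite M" "F \<subseteq> K \<times> M"
      using F subset_fst_snd[of F] unfolding K_def M_def by auto
    have "(\<Sum>z\<in>F. (cmod (direct_sum B x z))\<^sup>2) \<le> (\<Sum>z\<in>K \<times> M. (cmod (direct_sum B x z))\<^sup>2)"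
      by (rule sum_mono2) (use KM in auto)
    also have "\<dots> = (\<Sum>k\<in>K. \<Sum>m\<in>M. (cmod (B k (\<lambda>m. x (k, m)) m))\<^sup>2)"
      unfolding sum.cartesian_product by (intro sum.cong refl) (auto simp: direct_sum_apply)
    also have "\<dots> \<le> (\<Sum>k\<in>K. (C * l2norm (\<lambda>m. x (k, m)))\<^sup>2)"
    proof (rule sum_mono)
      fix k
      have "(\<Sum>m\<in>M. (cmod (B k (\<lambda>m. x (k, m)) m))\<^sup>2) \<le> (l2norm (B k (\<lambda>m. x (k, m))))\<^sup>2"
        by (intro sum_le_l2norm_squared B slice_l2 x KM)
      also have "\<dots> \<le> (C * l2norm (\<lambda>m. x (k, m)))\<^sup>2"
        by (intro power_mono B slice_l2 x l2norm_nonneg)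
      finally show "(\<Sum>m\<in>M. (cmod (B k (\<lambda>m. x (k, m)) m))\<^sup>2) \<le> (C * l2norm (\<lambda>m. x (k, m)))\<^sup>2" .
    qed
    also have "\<dots> = C\<^sup>2 * (\<Sum>k\<in>K. (l2norm (\<lambda>m. x (k, m)))\<^sup>2)"
      by (simp add: power_mult_distrib sum_distrib_left)
    also have "\<dots> \<le> C\<^sup>2 * (l2norm x)\<^sup>2" by (intro mult_left_mono sum_l2norm_slices_le x KM) simp
    finally show ?thesis by (simp add: power_mult_distrib)
  qed
  have "0 \<le> C * l2norm x" using C l2norm_nonneg[of x] by simp
  from l2_finite_sums_le[OF fin this]
  show "direct_sum B x \<in> l2" "l2norm (direct_sum B x) \<le> C * l2norm x" by auto
qed

lemma bounded_op_direct_sum: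
  assumes "\<And>k. bounded_op (B k)" "\<And>k f. f \<in> l2 \<Longrightarrow> l2norm (B k f) \<le> C * l2norm f" "C \<ge> 0"
  shows "bounded_op (direct_sum B)"
proof (rule bounded_opI)
  have B: "\<And>k f. f \<in> l2 \<Longrightarrow> B k f \<in> l2" using bounded_op_l2[OF assms(1)] by blast
  fix f :: "nat \<times> nat \<Rightarrow> complex" assume f: "f \<in> l2"
  show "direct_sum B f \<in> l2" "l2norm (direct_sum B f) \<le> C * l2norm f"
    using direct_sum_l2[OF B assms(2,3) f] by auto
next
  fix f g :: "nat \<times> nat \<Rightarrow> complex" and c assume fg: "f \<in> l2" "g \<in> l2"
  show "direct_sum B (\<lambda>i. c * f i + g i) = (\<lambda>i. c * direct_sum B f i + direct_sum B g i)"
  proof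
    fix z :: "nat \<times> nat"
    obtain k m where z: "z = (k, m)" by (cases z)
    have "B k (\<lambda>m. c * f (k, m) + g (k, m)) = (\<lambda>i. c * B k (\<lambda>m. f (k, m)) i + B k (\<lambda>m. g (k, m)) i)"
      by (rule bounded_op_lincomb[OF assms(1) slice_l2[OF fg(1)] slice_l2[OF fg(2)]])
    then show "direct_sum B (\<lambda>i. c * f i + g i) z = c * direct_sum B f z + direct_sum B g z"
      unfolding z direct_sum_apply by simp
  qed
qed

lemma resolvent_direct_sum:
  assumes B: "\<And>k. bounded_op (B k)" "\<And>k f. f \<in> l2 \<Longrightarrow> l2norm (B k f) \<le> C * l2norm f" "C \<ge> 0"
    and R: "\<And>k. bounded_op (R k)" "\<And>k f. f \<in> l2 \<Longrightarrow> l2norm (R k f) \<le> D * l2norm f" "D \<ge> 0"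
    and left: "\<And>k f. f \<in> l2 \<Longrightarrow> R k (\<lambda>i. l * f i - B k f i) = f"
    and right: "\<And>k f. f \<in> l2 \<Longrightarrow> (\<lambda>i. l * R k f i - B k (R k f) i) = f"
  shows "invertible_op (\<lambda>f i. l * f i - direct_sum B f i)"
    and "x \<in> l2 \<Longrightarrow> resolvent (direct_sum B) l x = direct_sum R x"
proof -
  have left': "direct_sum R (\<lambda>i. l * f i - direct_sum B f i) = f" if "f \<in> l2" for f
  proof
    fix z :: "nat \<times> nat"
    obtain k m where z: "z = (k, m)" by (cases z)
    show "direct_sum R (\<lambda>i. l * f i - direct_sum B f i) z = f z"
      unfolding z direct_sum_apply using left[OF slice_l2[OF that, of k]] by metis
  qed
  have right': "(\<lambda>i. l * direct_sum R f i - direct_sum B (direct_sum R f) i) = f" if "f \<in> l2" for f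
  proof
    fix z :: "nat \<times> nat"
    obtain k m where z: "z = (k, m)" by (cases z)
    show "l * direct_sum R f z - direct_sum B (direct_sum R f) z = f z"
      unfolding z direct_sum_apply using right[OF slice_l2[OF that, of k]] by metis
  qed
  show "invertible_op (\<lambda>f i. l * f i - direct_sum B f i)"
    by (rule invertible_opI[OF bounded_op_direct_sum[OF B] bounded_op_direct_sum[OF R] left' right'])
  show "x \<in> l2 \<Longrightarrow> resolvent (direct_sum B) l x = direct_sum R x"
    by (rule resolvent_eqI[OF bounded_op_direct_sum[OF R] left' right'])
qed

lemma l2norm_single_slice: "l2norm (\<lambda>(j, m). if j = k then g m else 0) = l2norm g"
proof -
  have "(\<Sum>\<^sub>\<infinity>z. (cmod (case z of (j, m) \<Rightarrow> if j = k then g m else 0))\<^sup>2)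
      = (\<Sum>\<^sub>\<infinity>z\<in>Pair k ` UNIV. (cmod (case z of (j, m) \<Rightarrow> if j = k then g m else 0))\<^sup>2)"
    by (rule infsum_cong_neutral) auto
  also have "\<dots> = (\<Sum>\<^sub>\<infinity>m. (cmod (g m))\<^sup>2)" by (subst infsum_reindex) (auto simp: inj_on_def comp_def)
  finally show ?thesis unfolding l2norm_def by simp
qed

lemma direct_sum_basis_vec:
  assumes "\<And>j. B j (\<lambda>_. 0) = (\<lambda>_. 0)"
  shows "direct_sum B (basis_vec (k, 0)) = (\<lambda>(j, m). if j = k then B k (basis_vec 0) m else 0)"
proof
  fix z :: "nat \<times> nat"
  obtain j m where z: "z = (j, m)" by (cases z)
  show "direct_sum B (basis_vec (k, 0)) z = (\<lambda>(j, m). if j = k then B k (basis_vec 0) m else 0) z"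
  proof (cases "j = k")
    case True
    then have "(\<lambda>m. basis_vec (k, 0) (j, m)) = basis_vec 0" by (auto simp: basis_vec_def)
    then have "B j (\<lambda>m. basis_vec (k, 0) (j, m)) = B k (basis_vec 0)" using True by (rule arg_cong2)
    then show ?thesis unfolding z direct_sum_apply using True by simp
  next
    case False
    then have "(\<lambda>m. basis_vec (k, 0) (j, m)) = (\<lambda>_. 0)" by (auto simp: basis_vec_def)
    then have "B j (\<lambda>m. basis_vec (k, 0) (j, m)) = B j (\<lambda>_. 0)" by (rule arg_cong)
    also have "\<dots> = (\<lambda>_. 0)" by (rule assms)
    finally have "B j (\<lambda>m. basis_vec (k, 0) (j, m)) = (\<lambda>_. 0)" .
    then show ?thesis unfolding z direct_sum_apply using False by simp
  qed
qed


section \<open>A direct sum of weighted shifts\<close>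

lemma wshift_res_zero: "l \<noteq> 0 \<Longrightarrow> wshift_res c l (\<lambda>_. 0) = (\<lambda>_. 0)"
  by (rule wshift_res_unique[symmetric]) (simp_all add: wshift_def)

lemma l2norm_wshift_le:
  assumes "0 \<le> c" "c \<le> 1" "f \<in> l2"
  shows "l2norm (wshift c f) \<le> l2norm f"
proof -
  have "c * l2norm f \<le> 1 * l2norm f" by (rule mult_right_mono[OF assms(2) l2norm_nonneg])
  then show ?thesis using wshift_l2(2)[OF assms(1,3)] by simp
qed

lemma l2norm_wshift_res_le:
  assumes "0 \<le> c" "c \<le> 1" "l \<noteq> 0" "f \<in> l2"
  shows "l2norm (wshift_res c l f) \<le> res_bound 1 (1 / cmod l) * l2norm f"
proof -
  have "res_bound c (1 / cmod l) * l2norm f \<le> res_bound 1 (1 / cmod l) * l2norm f"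
    by (rule mult_right_mono[OF res_bound_mono[OF assms(1,2)] l2norm_nonneg])
  then show ?thesis using wshift_res_l2(2)[OF assms(1,3,4)] by simp
qed

lemma resolvent_direct_sum_wshift:
  assumes c: "\<And>k. 0 \<le> c k" "\<And>k. c k \<le> 1" and l: "l \<noteq> 0"
  shows "invertible_op (\<lambda>f i. l * f i - direct_sum (\<lambda>k. wshift (c k)) f i)"
    and "x \<in> l2 \<Longrightarrow> resolvent (direct_sum (\<lambda>k. wshift (c k))) l x = direct_sum (\<lambda>k. wshift_res (c k) l) x"
proof -
  have W: "\<And>k f. f \<in> l2 \<Longrightarrow> l2norm (wshift (c k) f) \<le> 1 * l2norm f"
    using l2norm_wshift_le[OF c(1,2)] by simp
  have left: "\<And>k f. wshift_res (c k) l (\<lambda>i. l * f i - wshift (c k) f i) = f"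
    and right: "\<And>k f. (\<lambda>i. l * wshift_res (c k) l f i - wshift (c k) (wshift_res (c k) l f) i) = f"
    using wshift_res_inverse[OF l] by blast+
  note sum = resolvent_direct_sum[where B = "\<lambda>k. wshift (c k)" and R = "\<lambda>k. wshift_res (c k) l",
      OF bounded_op_wshift[OF c(1)] W zero_le_one bounded_op_wshift_res[OF c(1) l]
      l2norm_wshift_res_le[OF c(1,2) l] res_bound_nonneg left right]
  show "invertible_op (\<lambda>f i. l * f i - direct_sum (\<lambda>k. wshift (c k)) f i)" using sum(1) by simp
  show "x \<in> l2 \<Longrightarrow> resolvent (direct_sum (\<lambda>k. wshift (c k))) l x = direct_sum (\<lambda>k. wshift_res (c k) l) x"
    using sum(2) by simp
qed

lemma quasinilpotent_direct_sum_wshift: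
  assumes "\<And>k. 0 \<le> c k" "\<And>k. c k \<le> 1"
  shows "quasinilpotent (direct_sum (\<lambda>k. wshift (c k)))"
proof (rule quasinilpotentI[where j = "(0, 0)"])
  have "\<And>k f. f \<in> l2 \<Longrightarrow> l2norm (wshift (c k) f) \<le> 1 * l2norm f"
    using l2norm_wshift_le[OF assms] by simp
  then show "bounded_op (direct_sum (\<lambda>k. wshift (c k)))"
    by (rule bounded_op_direct_sum[OF bounded_op_wshift[OF assms(1)] _ zero_le_one])
  show "invertible_op (\<lambda>f i. l * f i - direct_sum (\<lambda>k. wshift (c k)) f i)" if "l \<noteq> 0" for l
    by (rule resolvent_direct_sum_wshift(1)[OF assms that])
  show "direct_sum (\<lambda>k. wshift (c k)) f (0, 0) = 0" for f
    by (simp add: direct_sum_apply)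
qed

lemma l2norm_direct_sum_wshift_res_basis_vec:
  assumes "c k \<ge> 0" "l \<noteq> 0"
  shows "l2norm (direct_sum (\<lambda>k. wshift_res (c k) l) (basis_vec (k, 0)))
    = 1 / cmod l * exp ((c k)\<^sup>2 * (1 / cmod l)\<^sup>2 / 2)"
  unfolding direct_sum_basis_vec[of "\<lambda>k. wshift_res (c k) l", OF wshift_res_zero[OF assms(2)]]
    l2norm_single_slice
  by (rule l2norm_wshift_res_basis_vec[OF assms])

lemma opnorm_direct_sum_wshift_res:
  assumes c: "\<And>k. 0 \<le> c k" "\<And>k. c k \<le> 1" "c 0 = 1" and l: "l \<noteq> 0"
  shows "1 / cmod l * exp ((1 / cmod l)\<^sup>2 / 2) \<le> opnorm (direct_sum (\<lambda>k. wshift_res (c k) l))"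
    and "opnorm (direct_sum (\<lambda>k. wshift_res (c k) l)) \<le> res_bound 1 (1 / cmod l)"
proof -
  note R = l2norm_wshift_res_le[OF c(1,2) l]
  have bounded: "bounded_op (direct_sum (\<lambda>k. wshift_res (c k) l))"
    by (rule bounded_op_direct_sum[OF bounded_op_wshift_res[OF c(1) l] R res_bound_nonneg])
  show "1 / cmod l * exp ((1 / cmod l)\<^sup>2 / 2) \<le> opnorm (direct_sum (\<lambda>k. wshift_res (c k) l))"
    using l2norm_le_opnorm[OF bounded basis_vec_l2[of "(0, 0)"]]
      l2norm_direct_sum_wshift_res_basis_vec[of c 0, OF c(1) l]
    by (simp add: l2norm_basis_vec c(3))
  show "opnorm (direct_sum (\<lambda>k. wshift_res (c k) l)) \<le> res_bound 1 (1 / cmod l)"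
    by (rule opnorm_le[OF direct_sum_l2(2)[OF wshift_res_l2(1)[OF c(1) l] R res_bound_nonneg]
          res_bound_nonneg])
qed

lemma tendsto_ln_ratio_direct_sum_wshift:
  assumes c: "\<And>k. 0 < c k" "\<And>k. c k \<le> 1" "c 0 = 1"
  defines "R l \<equiv> direct_sum (\<lambda>k. wshift_res (c k) l)"
  shows "((\<lambda>l. ln (l2norm (R l (basis_vec (k, 0)))) / ln (opnorm (R l))) \<longlongrightarrow> (c k)\<^sup>2) (at 0)"
proof -
  have c0: "0 \<le> c k" for k using c(1) less_imp_le by blast
  define n where "n r = r * exp ((c k)\<^sup>2 * r\<^sup>2 / 2)" for r :: real
  define lo where "lo r = r * exp (r\<^sup>2 / 2)" for r :: real
  have "eventually (\<lambda>l::complex. l \<noteq> 0) (at 0)" by (simp add: eventually_at_filter)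
  moreover have "eventually (\<lambda>l. 1 < 1 / cmod l) (at 0)"
    by (rule eventually_compose_filterlim[OF eventually_gt_at_top filterlim_inverse_norm_at_0])
  ultimately have ev: "eventually (\<lambda>l. l2norm (R l (basis_vec (k, 0))) = n (1 / cmod l) \<and>
      1 \<le> n (1 / cmod l) \<and> 1 < lo (1 / cmod l) \<and> lo (1 / cmod l) \<le> opnorm (R l) \<and>
      opnorm (R l) \<le> res_bound 1 (1 / cmod l)) (at 0)"
  proof eventually_elim
    case (elim l)
    have grow: "r \<le> r * exp y" if "0 \<le> r" "0 \<le> y" for r y :: real
      using mult_left_mono[of 1 "exp y" r] that by simp
    have "1 / cmod l \<le> n (1 / cmod l)" "1 / cmod l \<le> lo (1 / cmod l)"
      unfolding n_def lo_def by (intro grow; simp)+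
    then show ?case
      using elim(2) l2norm_direct_sum_wshift_res_basis_vec[of c k, OF c0 elim(1)]
        opnorm_direct_sum_wshift_res[of c, OF c0 c(2,3) elim(1)]
      unfolding R_def n_def lo_def by simp
  qed
  have "((\<lambda>r. ln (n r) / ln (lo r)) \<longlongrightarrow> (c k)\<^sup>2) at_top"
    unfolding n_def lo_def using c(1)[of k] by real_asymp
  note lim_lo = filterlim_compose[OF this filterlim_inverse_norm_at_0]
  have "((\<lambda>r. ln (n r) / ln (res_bound 1 r)) \<longlongrightarrow> (c k)\<^sup>2) at_top"
    unfolding n_def res_bound_def using c(1)[of k] by real_asymp
  note lim_up = filterlim_compose[OF this filterlim_inverse_norm_at_0]
  have "eventually (\<lambda>l. 1 \<le> n (1 / cmod l) \<and> 1 < lo (1 / cmod l) \<and> lo (1 / cmod l) \<le> opnorm (R l) \<and>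
      opnorm (R l) \<le> res_bound 1 (1 / cmod l)) (at 0)"
    using ev by (rule eventually_mono) blast
  from tendsto_ln_ratio_sandwich[OF this lim_lo lim_up]
  show ?thesis by (rule Lim_transform_eventually) (use ev in \<open>auto elim: eventually_mono\<close>)
qed

lemma kx_direct_sum_wshift:
  assumes c: "\<And>k. 0 < c k" "\<And>k. c k \<le> 1" "c 0 = 1"
  shows "kx (direct_sum (\<lambda>k. wshift (c k))) (basis_vec (k, 0)) = ereal ((c k)\<^sup>2)"
proof -
  have "kx (direct_sum (\<lambda>k. wshift (c k))) (basis_vec (k, 0)) = Limsup (at 0) (\<lambda>l. ereal
      (ln (l2norm (direct_sum (\<lambda>k. wshift_res (c k) l) (basis_vec (k, 0))))
        / ln (opnorm (direct_sum (\<lambda>k. wshift_res (c k) l)))))"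
    using resolvent_direct_sum_wshift(2)[of c] c(1,2) less_imp_le
    by (intro kx_eq_Limsup basis_vec_l2) blast
  also have "\<dots> = ereal ((c k)\<^sup>2)"
    by (intro lim_imp_Limsup tendsto_ereal tendsto_ln_ratio_direct_sum_wshift[of c, OF c]) simp
  finally show ?thesis .
qed

lemma power_set_direct_sum_wshift:
  assumes "\<And>k. 0 < c k" "\<And>k. c k \<le> 1" "c 0 = 1"
  shows "ereal ((c k)\<^sup>2) \<in> power_set (direct_sum (\<lambda>k. wshift (c k)))"
  unfolding power_set_def kx_direct_sum_wshift[of c, OF assms, symmetric]
  by (intro CollectI exI[of _ "basis_vec (k, 0)"]) (simp add: basis_vec_l2 basis_vec_nonzero)

theorem corollary3p8:
  "\<exists>A :: nat \<Rightarrow> ((nat \<Rightarrow> complex) \<Rightarrow> (nat \<Rightarrow> complex)).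
     (\<forall>k. quasinilpotent (A k)) \<and>
     quasinilpotent (direct_sum A) \<and>
     ereal ` closure {r :: real. ereal r \<in> (\<Union>k. power_set (A k))}
       \<subset> power_set (direct_sum A)"
proof -
  define c where "c k = (if k = 0 then 1 else 1 / 2 :: real)" for k :: nat
  have c: "\<And>k. 0 < c k" "\<And>k. c k \<le> 1" "c 0 = 1" by (simp_all add: c_def)
  then have c0: "\<And>k. 0 \<le> c k" by (simp add: less_imp_le)
  have "(\<Union>k. power_set (wshift (c k))) = {1}" by (simp add: power_set_wshift[OF c(1)])
  then have summands: "ereal ` closure {r. ereal r \<in> (\<Union>k. power_set (wshift (c k)))} = {1}"
    by (simp add: one_ereal_def)
  have "(c 0)\<^sup>2 = 1" "(c 1)\<^sup>2 = 1 / 4" by (simp_all add: c_def power2_eq_square)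
  then have "1 \<in> power_set (direct_sum (\<lambda>k. wshift (c k)))"
    and "ereal (1 / 4) \<in> power_set (direct_sum (\<lambda>k. wshift (c k)))"
    using power_set_direct_sum_wshift[of c, OF c] by (metis one_ereal_def)+
  moreover have "ereal (1 / 4) \<noteq> 1" by (simp add: one_ereal_def)
  ultimately have "ereal ` closure {r. ereal r \<in> (\<Union>k. power_set (wshift (c k)))}
      \<subset> power_set (direct_sum (\<lambda>k. wshift (c k)))"
    unfolding summands by blast
  then show ?thesis
    by (intro exI[of _ "\<lambda>k. wshift (c k)"] conjI allI quasinilpotent_wshift[OF c0]
        quasinilpotent_direct_sum_wshift[of c, OF c0 c(2)])
qed

end
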